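(* Let $n\ge2$ be an integer, $T_1,\dots,T_n\in B(\mathcal H)$, $\varphi(X):=\sum_{i=1}^nT_iXT_i^*$, and let $D\in B(\mathcal H)$ be positive with $\varphi(D)\le D$. For $k\ge0$ let $M_k(\varphi,D):=\operatorname{span}\{T_\alpha\xi:\alpha\in\mathbb F_n^+,\ |\alpha|\le k,\ \xi\in(D-\varphi(D))^{1/2}\mathcal H\}$. Then the Euler characteristic $$\chi(\varphi,D):=\lim_{k\to\infty}\frac{\dim M_k(\varphi,D)}{1+n+\cdots+n^k}$$ exists (in $[0,\infty]$) and $$\chi(\varphi,D)=\lim_{k\to\infty}\frac{\operatorname{rank}[K_{\varphi,D}^*(P_{\le k}\otimes I)K_{\varphi,D}]}{1+n+\cdots+n^k}=(n-1)\lim_{k\to\infty}\frac{\operatorname{rank}[D-\varphi^k(D)]}{n^k}.$$ Moreover, $\chi(\varphi,D)<\infty$ if and only if $\operatorname{rank}[D-\varphi(D)]<\infty$.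
   Context: $\mathbb F_n^+$ is the free semigroup on $g_1,\dots,g_n$; for $\alpha=g_{i_1}\cdots g_{i_k}$, $|\alpha|=k$, $T_\alpha=T_{i_1}\cdots T_{i_k}$, $e_\alpha=e_{i_1}\otimes\cdots\otimes e_{i_k}$ (empty word: $T=I$, $e=1$). $F^2(H_n)$ is the full Fock space with orthonormal basis $\{e_\alpha\}_{\alpha\in\mathbb F_n^+}$; $P_{\le k}$ is the projection onto $\operatorname{span}\{e_\alpha:|\alpha|\le k\}$. The Poisson kernel is $K_{\varphi,D}h:=\sum_{\alpha\in\mathbb F_n^+}e_\alpha\otimes(D-\varphi(D))^{1/2}T_\alpha^*h$, $h\in\mathcal H$. *)

theory Defs
  imports "HOL-Analysis.Analysis"
begin

text \<open>HOL-Analysis only provides real inner product spaces, so complex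
  Hilbert spaces are introduced here as a type class.  The inner product is
  antilinear in the first and linear in the second argument.\<close>

class complex_vector = real_vector +
  fixes scaleC :: "complex \<Rightarrow> 'a \<Rightarrow> 'a" (infixr \<open>*\<^sub>C\<close> 75)
  assumes scaleC_add_right: "a *\<^sub>C (x + y) = a *\<^sub>C x + a *\<^sub>C y"
    and scaleC_add_left: "(a + b) *\<^sub>C x = a *\<^sub>C x + b *\<^sub>C x"
    and scaleC_scaleC: "a *\<^sub>C (b *\<^sub>C x) = (a * b) *\<^sub>C x"
    and scaleC_one: "1 *\<^sub>C x = x"
    and scaleR_scaleC: "scaleR r x = complex_of_real r *\<^sub>C x"

class complex_inner = complex_vector + real_normed_vector +
  fixes cinner :: "'a \<Rightarrow> 'a \<Rightarrow> complex"
  assumes cinner_commute: "cinner x y = cnj (cinner y x)"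
    and cinner_add_left: "cinner (x + y) z = cinner x z + cinner y z"
    and cinner_scaleC_left: "cinner (r *\<^sub>C x) y = cnj r * cinner x y"
    and cinner_self_real: "cinner x x \<in> \<real>"
    and cinner_self_nonneg: "0 \<le> Re (cinner x x)"
    and cinner_self_eq_zero: "cinner x x = 0 \<longleftrightarrow> x = 0"
    and norm_eq_sqrt_cinner: "norm x = sqrt (Re (cinner x x))"

class chilbert_space = complex_inner + complete_space

text \<open>Non-vacuity: the complex numbers form a complex Hilbert space.\<close>

instantiation complex :: chilbert_space
begin
definition scaleC_complex_def: "scaleC a (x::complex) = a * x"
definition cinner_complex_def: "cinner (x::complex) y = cnj x * y"
instance
proof
  fix a b :: complex and x y z :: complex and r :: real
  show "a *\<^sub>C (x + y) = a *\<^sub>C x + a *\<^sub>C y" by (simp add: scaleC_complex_def algebra_simps)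
  show "(a + b) *\<^sub>C x = a *\<^sub>C x + b *\<^sub>C x" by (simp add: scaleC_complex_def algebra_simps)
  show "a *\<^sub>C (b *\<^sub>C x) = (a * b) *\<^sub>C x" by (simp add: scaleC_complex_def algebra_simps)
  show "1 *\<^sub>C x = x" by (simp add: scaleC_complex_def)
  show "scaleR r x = complex_of_real r *\<^sub>C x" by (simp add: scaleC_complex_def scaleR_conv_of_real)
  show "cinner x y = cnj (cinner y x)" by (simp add: cinner_complex_def)
  show "cinner (x + y) z = cinner x z + cinner y z" by (simp add: cinner_complex_def algebra_simps)
  show "cinner (a *\<^sub>C x) y = cnj a * cinner x y" by (simp add: cinner_complex_def scaleC_complex_def)
  show "cinner x x \<in> \<real>" by (simp add: cinner_complex_def mult.commute[of "cnj x"] complex_mult_cnj)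
  show "0 \<le> Re (cinner x x)" by (simp add: cinner_complex_def complex_mult_cnj)
  show "cinner x x = 0 \<longleftrightarrow> x = 0" by (simp add: cinner_complex_def)
  show "norm x = sqrt (Re (cinner x x))"
    by (simp add: cinner_complex_def complex_mult_cnj norm_complex_def power2_eq_square)
qed
end

text \<open>The dimension of a subset \<open>V\<close> is the dimension of its complex span, i.e. the
  supremum of the cardinalities of finite complex-linearly independent subsets
  of \<open>cspan V\<close>; it equals \<open>\<infinity>\<close> for infinite dimensional spans.\<close>

definition cspan :: "'a::complex_vector set \<Rightarrow> 'a set" where
  "cspan S = module.span scaleC S"

definition cdim :: "'a::complex_vector set \<Rightarrow> ennreal" where
  "cdim V = (SUP B \<in> {B. finite B \<and> B \<subseteq> cspan V \<and> \<not> module.dependent scaleC B}.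
               ennreal (real (card B)))"

definition bounded_clinear :: "('a::complex_inner \<Rightarrow> 'b::complex_inner) \<Rightarrow> bool" where
  "bounded_clinear f \<longleftrightarrow>
     (\<forall>x y. f (x + y) = f x + f y) \<and> (\<forall>c x. f (c *\<^sub>C x) = c *\<^sub>C f x) \<and>
     (\<exists>K. \<forall>x. norm (f x) \<le> norm x * K)"

definition cadjoint :: "('a::chilbert_space \<Rightarrow> 'a) \<Rightarrow> ('a \<Rightarrow> 'a)" where
  "cadjoint T = (THE S. \<forall>x y. cinner (S x) y = cinner x (T y))"

definition positive_op :: "('a::chilbert_space \<Rightarrow> 'a) \<Rightarrow> bool" where
  "positive_op A \<longleftrightarrow> bounded_clinear A \<and>
     (\<forall>x. cinner x (A x) \<in> \<real> \<and> 0 \<le> Re (cinner x (A x)))"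

definition op_le :: "('a::chilbert_space \<Rightarrow> 'a) \<Rightarrow> ('a \<Rightarrow> 'a) \<Rightarrow> bool" where
  "op_le A B \<longleftrightarrow> positive_op (\<lambda>x. B x - A x)"

definition op_sqrt :: "('a::chilbert_space \<Rightarrow> 'a) \<Rightarrow> ('a \<Rightarrow> 'a)" where
  "op_sqrt A = (THE B. positive_op B \<and> B \<circ> B = A)"

definition op_rank :: "('a::chilbert_space \<Rightarrow> 'a) \<Rightarrow> ennreal" where
  "op_rank A = cdim (range A)"

text \<open>Words \<open>\<alpha> \<in> \<bbbF>\<^sub>n\<^sup>+\<close> are lists over \<open>{..<n}\<close> (generator \<open>g\<^sub>i\<close> is the letter \<open>i\<close>,
  \<open>i < n\<close>); \<open>|\<alpha>|\<close> is the length.  \<open>T\<^sub>\<alpha> = T\<^sub>i\<^sub>1 \<cdots> T\<^sub>i\<^sub>k\<close>, empty word gives \<open>I\<close>.\<close>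

definition words :: "nat \<Rightarrow> nat list set" where
  "words n = lists {..<n}"

definition word_op :: "(nat \<Rightarrow> 'a \<Rightarrow> 'a) \<Rightarrow> nat list \<Rightarrow> 'a \<Rightarrow> 'a" where
  "word_op T \<alpha> = foldr (\<lambda>i f. T i \<circ> f) \<alpha> id"

definition phi_map :: "nat \<Rightarrow> (nat \<Rightarrow> 'a::chilbert_space \<Rightarrow> 'a) \<Rightarrow> ('a \<Rightarrow> 'a) \<Rightarrow> ('a \<Rightarrow> 'a)" where
  "phi_map n T X = (\<lambda>x. \<Sum>i<n. T i (X (cadjoint (T i) x)))"

definition M_space :: "nat \<Rightarrow> (nat \<Rightarrow> 'a::chilbert_space \<Rightarrow> 'a) \<Rightarrow> ('a \<Rightarrow> 'a) \<Rightarrow> nat \<Rightarrow> 'a set" where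
  "M_space n T D k = cspan {word_op T \<alpha> \<xi> | \<alpha> \<xi>. \<alpha> \<in> words n \<and> length \<alpha> \<le> k \<and>
       \<xi> \<in> range (op_sqrt (\<lambda>x. D x - phi_map n T D x))}"

text \<open>The full Fock space tensor \<open>\<H>\<close>, \<open>F\<^sup>2(H\<^sub>n) \<otimes> \<H>\<close>, is identified (via
  \<open>e\<^sub>\<alpha> \<otimes> h \<mapsto> \<delta>\<^sub>\<alpha> h\<close>) with the \<open>\<H>\<close>-valued square summable functions on \<open>\<bbbF>\<^sub>n\<^sup>+\<close>,
  with inner product \<open>\<langle>F,G\<rangle> = \<Sum>\<^sub>\<alpha> \<langle>F \<alpha>, G \<alpha>\<rangle>\<close>.  Then
  \<open>K\<^sub>\<phi>\<^sub>,\<^sub>D h = (\<alpha> \<mapsto> (D - \<phi>(D))\<^sup>1\<^sup>/\<^sup>2 T\<^sub>\<alpha>\<^sup>* h)\<close>, \<open>P\<^sub>\<le>\<^sub>k \<otimes> I\<close> is restriction to words of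
  length \<open>\<le> k\<close>, and \<open>K\<^sup>*\<close> is the Hilbert space adjoint of \<open>K\<close>.\<close>

definition poisson_K :: "nat \<Rightarrow> (nat \<Rightarrow> 'a::chilbert_space \<Rightarrow> 'a) \<Rightarrow> ('a \<Rightarrow> 'a) \<Rightarrow> 'a \<Rightarrow> (nat list \<Rightarrow> 'a)" where
  "poisson_K n T D h = (\<lambda>\<alpha>. if \<alpha> \<in> words n
      then op_sqrt (\<lambda>x. D x - phi_map n T D x) (cadjoint (word_op T \<alpha>) h) else 0)"

definition fock_proj :: "nat \<Rightarrow> (nat list \<Rightarrow> 'a::zero) \<Rightarrow> (nat list \<Rightarrow> 'a)" where
  "fock_proj k F = (\<lambda>\<alpha>. if length \<alpha> \<le> k then F \<alpha> else 0)"

definition poisson_K_adj :: "nat \<Rightarrow> (nat \<Rightarrow> 'a::chilbert_space \<Rightarrow> 'a) \<Rightarrow> ('a \<Rightarrow> 'a) \<Rightarrow> (nat list \<Rightarrow> 'a) \<Rightarrow> 'a" where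
  "poisson_K_adj n T D F = (THE y. \<forall>x. cinner x y =
      infsum (\<lambda>\<alpha>. cinner (poisson_K n T D x \<alpha>) (F \<alpha>)) (words n))"

end

theory Submission
  imports Defs "HOL-Computational_Algebra.Formal_Power_Series"
begin

(* Write \<Delta> = D - \<phi>(D) \<ge> 0 and P\<^sub>k = D - \<phi>\<^sup>k\<^sup>+\<^sup>1(D).  Telescoping gives
   P\<^sub>k = \<Sum>\<^sub>|\<^sub>\<alpha>\<^sub>| \<^sub>\<le> \<^sub>k T\<^sub>\<alpha> \<Delta> T\<^sub>\<alpha>\<^sup>*, which is also K\<^sup>*(P\<^sub>\<le>\<^sub>k \<otimes> I)K.  So the range of P\<^sub>k lies in M\<^sub>k, and
   \<langle>x, P\<^sub>k x\<rangle> = \<Sum>\<^sub>\<alpha> \<parallel>\<Delta>\<^sup>1\<^sup>/\<^sup>2 T\<^sub>\<alpha>\<^sup>* x\<parallel>\<^sup>2 vanishes only if x \<perp> M\<^sub>k; hence P\<^sub>k is injective on M\<^sub>k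
   and rank P\<^sub>k = dim M\<^sub>k.  Since M\<^sub>k\<^sub>+\<^sub>1 = \<Delta>\<^sup>1\<^sup>/\<^sup>2 H + \<Sum>\<^sub>i T\<^sub>i M\<^sub>k, the dimensions d\<^sub>k = dim M\<^sub>k satisfy
   d\<^sub>k\<^sub>+\<^sub>2 - d\<^sub>k\<^sub>+\<^sub>1 \<le> n (d\<^sub>k\<^sub>+\<^sub>1 - d\<^sub>k), which makes d\<^sub>k / (1 + n + \<dots> + n\<^sup>k) decreasing, hence
   convergent; dividing by n\<^sup>k\<^sup>+\<^sup>1 instead multiplies the limit by 1/(n - 1).  If M\<^sub>0 is
   infinite-dimensional, all the quantities are infinite.
   The square root \<Delta>\<^sup>1\<^sup>/\<^sup>2 is built from the binomial series and adjoints from the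
   Riesz representation theorem. *)

global_interpretation cv: vector_space "scaleC :: complex \<Rightarrow> 'a \<Rightarrow> 'a::complex_vector"
  by unfold_locales (simp_all add: scaleC_add_right scaleC_add_left scaleC_scaleC scaleC_one)

lemma cspan_eq_span: "cspan S = cv.span S"
  by (simp add: cspan_def)

lemma cinner_add_right: "cinner x (y + z) = cinner x y + cinner x z"
  by (metis cinner_commute cinner_add_left complex_cnj_add)

lemma cinner_scaleC_right: "cinner x (r *\<^sub>C y) = r * cinner x y"
  by (metis cinner_commute cinner_scaleC_left complex_cnj_mult complex_cnj_cnj)

lemma cinner_zero_left [simp]: "cinner 0 x = 0"
  using cinner_add_left[of 0 0 x] by simp

lemma cinner_zero_right [simp]: "cinner x 0 = 0"
  using cinner_add_right[of x 0 0] by simp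

lemma cinner_minus_left: "cinner (- x) y = - cinner x y"
  using cinner_add_left[of x "-x" y] by (simp add: eq_neg_iff_add_eq_0 add.commute)

lemma cinner_minus_right: "cinner x (- y) = - cinner x y"
  using cinner_add_right[of x y "-y"] by (simp add: eq_neg_iff_add_eq_0 add.commute)

lemma cinner_diff_left: "cinner (x - y) z = cinner x z - cinner y z"
  using cinner_add_left[of x "-y" z] by (simp add: cinner_minus_left)

lemma cinner_diff_right: "cinner x (y - z) = cinner x y - cinner x z"
  using cinner_add_right[of x y "-z"] by (simp add: cinner_minus_right)

lemma cinner_sum_right: "cinner x (\<Sum>i\<in>A. f i) = (\<Sum>i\<in>A. cinner x (f i))"
  by (induction A rule: infinite_finite_induct) (simp_all add: cinner_add_right)

lemma cinner_scaleR_right: "cinner x (r *\<^sub>R y) = complex_of_real r * cinner x y"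
  by (simp add: scaleR_scaleC[of r y] cinner_scaleC_right)

lemmas cinner_simps = cinner_add_left cinner_add_right cinner_diff_left cinner_diff_right
  cinner_scaleC_left cinner_scaleC_right cinner_minus_left cinner_minus_right

lemma cinner_self_norm: "cinner x x = complex_of_real ((norm x)\<^sup>2)"
proof -
  have "Re (cinner x x) = (norm x)\<^sup>2"
    using norm_eq_sqrt_cinner[of x] cinner_self_nonneg[of x] by simp
  moreover have "Im (cinner x x) = 0"
    using cinner_self_real[of x] by (simp add: complex_is_Real_iff)
  ultimately show ?thesis by (simp add: complex_eq_iff)
qed

lemma cinner_self_Re: "Re (cinner x x) = (norm x)\<^sup>2"
  by (simp add: cinner_self_norm)

lemma cinner_self_Im: "Im (cinner x x) = 0"
  by (simp add: cinner_self_norm)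

lemma cinner_ext_right: "(\<And>z. cinner z x = cinner z y) \<Longrightarrow> x = y"
  by (metis cinner_diff_right cinner_self_eq_zero eq_iff_diff_eq_0)

lemma cinner_ext_left: "(\<And>z. cinner x z = cinner y z) \<Longrightarrow> x = y"
  by (metis cinner_diff_left cinner_self_eq_zero eq_iff_diff_eq_0)

lemma norm_add_sq: "(norm (x + y))\<^sup>2 = (norm x)\<^sup>2 + (norm y)\<^sup>2 + 2 * Re (cinner x y)"
proof -
  have "(norm (x + y))\<^sup>2 = Re (cinner (x + y) (x + y))" by (simp add: cinner_self_Re)
  also have "\<dots> = Re (cinner x x) + Re (cinner y y) + Re (cinner x y) + Re (cinner y x)"
    by (simp add: cinner_add_left cinner_add_right)
  also have "Re (cinner y x) = Re (cinner x y)" by (subst cinner_commute) simp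
  finally show ?thesis by (simp add: cinner_self_Re)
qed

lemma norm_diff_sq: "(norm (x - y))\<^sup>2 = (norm x)\<^sup>2 + (norm y)\<^sup>2 - 2 * Re (cinner x y)"
  using norm_add_sq[of x "-y"] by (simp add: cinner_minus_right)

lemma parallelogram_law:
  "(norm (x + y))\<^sup>2 + (norm (x - y))\<^sup>2 = 2 * (norm x)\<^sup>2 + 2 * (norm y)\<^sup>2"
  for x y :: "'a::complex_inner"
  using norm_add_sq[of x y] norm_diff_sq[of x y] by simp

lemma norm_scaleC: "norm (c *\<^sub>C (x::'a::complex_inner)) = cmod c * norm x"
proof -
  have "cinner (c *\<^sub>C x) (c *\<^sub>C x) = (c * cnj c) * cinner x x"
    by (simp add: cinner_simps mult.commute)
  also have "\<dots> = complex_of_real ((cmod c * norm x)\<^sup>2)"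
    by (simp only: complex_norm_square[symmetric] cinner_self_norm of_real_mult power_mult_distrib)
  finally have "(norm (c *\<^sub>C x))\<^sup>2 = (cmod c * norm x)\<^sup>2"
    by (simp only: cinner_self_norm of_real_eq_iff)
  then show ?thesis by (simp add: power2_eq_iff_nonneg)
qed

definition clinear :: "('a::complex_vector \<Rightarrow> 'b::complex_vector) \<Rightarrow> bool" where
  "clinear f \<longleftrightarrow> (\<forall>x y. f (x + y) = f x + f y) \<and> (\<forall>c x. f (c *\<^sub>C x) = c *\<^sub>C f x)"

definition positive_form :: "('a::complex_inner \<Rightarrow> 'a) \<Rightarrow> bool" where
  "positive_form A \<longleftrightarrow> (\<forall>x. Im (cinner x (A x)) = 0 \<and> 0 \<le> Re (cinner x (A x)))"

lemma clinear_add: "clinear f \<Longrightarrow> f (x + y) = f x + f y"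
  by (simp add: clinear_def)

lemma clinear_scaleC: "clinear f \<Longrightarrow> f (c *\<^sub>C x) = c *\<^sub>C f x"
  by (simp add: clinear_def)

lemma clinear_module_hom: "clinear f \<Longrightarrow> module_hom scaleC scaleC f"
  unfolding module_hom_def module_hom_axioms_def
  by (simp add: clinear_def cv.module_axioms)

lemma clinear_diff: "clinear f \<Longrightarrow> f (x - y) = f x - f y"
  using module_hom.diff[OF clinear_module_hom] by blast

lemma clinear_sum: "clinear f \<Longrightarrow> f (\<Sum>i\<in>A. g i) = (\<Sum>i\<in>A. f (g i))"
  using module_hom.sum[OF clinear_module_hom] by blast

lemma clinear_scaleR: "clinear f \<Longrightarrow> f (r *\<^sub>R x) = r *\<^sub>R f x"
  by (simp add: scaleR_scaleC clinear_scaleC)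

lemma clinear_span_image: "clinear f \<Longrightarrow> f ` cv.span S = cv.span (f ` S)"
  using module_hom.span_image[OF clinear_module_hom] by metis

lemma clinear_ident: "clinear (\<lambda>x. x)"
  by (simp add: clinear_def)

lemma clinear_compose: "clinear f \<Longrightarrow> clinear g \<Longrightarrow> clinear (\<lambda>x. f (g x))"
  by (simp add: clinear_def)

lemma clinear_diff_fun: "clinear f \<Longrightarrow> clinear g \<Longrightarrow> clinear (\<lambda>x. f x - g x)"
  by (simp add: clinear_def cv.scale_right_diff_distrib algebra_simps)

lemma clinear_sum_fun: "(\<And>i. i \<in> A \<Longrightarrow> clinear (f i)) \<Longrightarrow> clinear (\<lambda>x. \<Sum>i\<in>A. f i x)"
  by (simp add: clinear_def sum.distrib cv.scale_sum_right)

lemma clinear_scaleR_fun: "clinear f \<Longrightarrow> clinear (\<lambda>x. r *\<^sub>R f x)"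
  by (simp add: clinear_def scaleR_scaleC cv.scale_right_distrib mult.commute)

lemma bounded_clinear_clinear: "bounded_clinear f \<Longrightarrow> clinear f"
  by (simp add: bounded_clinear_def clinear_def)

lemma bounded_clinear_bounded_linear: "bounded_clinear f \<Longrightarrow> bounded_linear f"
  unfolding bounded_clinear_def
  by (auto intro!: bounded_linear_intro simp: scaleR_scaleC)

lemma bounded_clinear_ident: "bounded_clinear (\<lambda>x::'a::complex_inner. x)"
  unfolding bounded_clinear_def by (intro conjI allI exI[of _ 1]) simp_all

lemma bounded_clinear_compose:
  assumes f: "bounded_clinear f" and g: "bounded_clinear g"
  shows "bounded_clinear (\<lambda>x. f (g x))"
proof -
  obtain Kf where Kf: "\<And>x. norm (f x) \<le> norm x * Kf" using f by (auto simp: bounded_clinear_def)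
  obtain Kg where Kg: "\<And>x. norm (g x) \<le> norm x * Kg" using g by (auto simp: bounded_clinear_def)
  have "norm (f (g x)) \<le> norm x * (\<bar>Kg\<bar> * \<bar>Kf\<bar>)" for x
  proof -
    have "norm (f (g x)) \<le> norm (g x) * \<bar>Kf\<bar>"
      using Kf[of "g x"] by (meson abs_ge_self mult_left_mono norm_ge_zero order_trans)
    also have "\<dots> \<le> (norm x * \<bar>Kg\<bar>) * \<bar>Kf\<bar>"
      using Kg[of x] by (intro mult_right_mono) (auto intro: order_trans[OF _ mult_left_mono[OF abs_ge_self]])
    finally show ?thesis by (simp add: mult_ac)
  qed
  then show ?thesis
    using f g unfolding bounded_clinear_def by auto
qed

lemma positive_op_iff: "positive_op A \<longleftrightarrow> bounded_clinear A \<and> positive_form A"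
  by (simp add: positive_op_def positive_form_def complex_is_Real_iff)

lemma positive_formD_Im: "positive_form A \<Longrightarrow> Im (cinner x (A x)) = 0"
  by (simp add: positive_form_def)

lemma positive_formD_Re: "positive_form A \<Longrightarrow> 0 \<le> Re (cinner x (A x))"
  by (simp add: positive_form_def)

lemma positive_form_ident: "positive_form (\<lambda>x. x)"
  by (simp add: positive_form_def cinner_self_Im cinner_self_nonneg)

lemma real_form_hermitian:
  assumes "clinear A" and real: "\<And>x. Im (cinner x (A x)) = 0"
  shows "cinner x (A y) = cnj (cinner y (A x))"
proof -
  define u where "u = cinner x (A y)"
  define v where "v = cinner y (A x)"
  have "cinner (x + y) (A (x + y)) = cinner x (A x) + cinner y (A y) + u + v"
    using assms(1) by (simp add: clinear_add cinner_simps u_def v_def)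
  then have "Im (u + v) = 0" using real[of "x + y"] real[of x] real[of y] by simp
  moreover have "cinner (x + \<i> *\<^sub>C y) (A (x + \<i> *\<^sub>C y)) =
        cinner x (A x) + cinner y (A y) + \<i> * u - \<i> * v"
    using assms(1) by (simp add: clinear_add clinear_scaleC cinner_simps u_def v_def algebra_simps)
  then have "Re (u - v) = 0" using real[of "x + \<i> *\<^sub>C y"] real[of x] real[of y] by simp
  ultimately show ?thesis unfolding u_def[symmetric] v_def[symmetric]
    by (simp add: complex_eq_iff)
qed

lemma positive_form_selfadjoint:
  assumes "clinear A" "positive_form A"
  shows "cinner (A x) y = cinner x (A y)"
  using real_form_hermitian[OF assms(1) positive_formD_Im[OF assms(2)], of x y]
  by (simp add: cinner_commute[of y])

lemma quadratic_nonneg_imp_le: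
  fixes p b q :: real
  assumes "\<And>s. 0 \<le> p - 2 * s * b + s\<^sup>2 * b * q" "0 \<le> b" "0 \<le> q"
  shows "b \<le> p * q"
proof (cases "q > 0")
  case True
  have "0 \<le> p - 2 * (1/q) * b + (1/q)\<^sup>2 * b * q" using assms(1) .
  also have "\<dots> = p - b / q" using True by (simp add: power2_eq_square field_simps)
  finally show ?thesis using True by (simp add: field_simps mult.commute)
next
  case False
  with assms(3) have "q = 0" by simp
  show ?thesis
  proof (rule ccontr)
    assume "\<not> b \<le> p * q"
    with \<open>q = 0\<close> have "b > 0" by simp
    have "0 \<le> p - 2 * ((p + 1) / (2 * b)) * b" using assms(1)[of "(p + 1) / (2 * b)"] \<open>q = 0\<close> by simp
    also have "\<dots> = -1" using \<open>b > 0\<close> by (simp add: field_simps)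
    finally show False by simp
  qed
qed

lemma positive_form_cauchy_schwarz:
  assumes A: "clinear A" "positive_form A"
  shows "(cmod (cinner x (A y)))\<^sup>2 \<le> Re (cinner x (A x)) * Re (cinner y (A y))"
proof -
  define b where "b = cinner x (A y)"
  define p where "p = Re (cinner x (A x))"
  define q where "q = Re (cinner y (A y))"
  have hy: "cinner y (A x) = cnj b"
    unfolding b_def using real_form_hermitian[OF A(1) positive_formD_Im[OF A(2)], of y x] by simp
  have cb: "cmod b * cmod b = Re b * Re b + Im b * Im b"
    using cmod_power2[of b] by (simp add: power2_eq_square)
  have "0 \<le> p - 2 * s * (cmod b)\<^sup>2 + s\<^sup>2 * (cmod b)\<^sup>2 * q" for s :: real
  proof -
    define t where "t = - (complex_of_real s * cnj b)"
    have "cinner (x + t *\<^sub>C y) (A (x + t *\<^sub>C y)) =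
       cinner x (A x) + t * b + cnj t * cnj b + cnj t * t * cinner y (A y)"
      using A(1) by (simp add: clinear_add clinear_scaleC cinner_simps b_def[symmetric] hy algebra_simps)
    also have "Re \<dots> = p - 2 * s * (cmod b)\<^sup>2 + s\<^sup>2 * (cmod b)\<^sup>2 * q"
      using positive_formD_Im[OF A(2), of y]
      by (simp add: t_def p_def q_def cb power2_eq_square algebra_simps)
    finally show ?thesis using positive_formD_Re[OF A(2)] by metis
  qed
  from quadratic_nonneg_imp_le[OF this] show ?thesis
    using positive_formD_Re[OF A(2)] by (simp add: b_def p_def q_def)
qed

lemma cinner_cauchy_schwarz: "cmod (cinner x y) \<le> norm x * norm y"
proof -
  have "(cmod (cinner x y))\<^sup>2 \<le> (norm x * norm y)\<^sup>2"
    using positive_form_cauchy_schwarz[OF clinear_ident positive_form_ident, of x y]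
    by (simp add: cinner_self_Re power_mult_distrib)
  then show ?thesis by (simp add: power2_le_iff_abs_le)
qed

lemma bounded_linear_cinner_right: "bounded_linear (\<lambda>y. cinner x y)"
proof (rule bounded_linear_intro[where K = "norm x"])
  show "cinner x (r *\<^sub>R y) = r *\<^sub>R cinner x y" for r y
    by (simp add: cinner_scaleR_right scaleR_conv_of_real)
  show "norm (cinner x y) \<le> norm y * norm x" for y
    using cinner_cauchy_schwarz[of x y] by (simp add: mult.commute)
qed (rule cinner_add_right)

lemma positive_form_zero_imp_zero:
  assumes "clinear A" "positive_form A" "Re (cinner x (A x)) = 0"
  shows "A x = 0"
proof -
  have "(cmod (cinner y (A x)))\<^sup>2 \<le> 0" for y
    using positive_form_cauchy_schwarz[OF assms(1,2), of y x] assms(3) by simp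
  then have "cinner y (A x) = 0" for y by simp
  then show ?thesis using cinner_self_eq_zero by blast
qed

section \<open>Riesz representation and adjoints\<close>

lemma minimizing_sequence_Cauchy:
  fixes x :: "'a::chilbert_space"
  assumes "convex N" and y: "\<And>k. y k \<in> N" and d: "\<And>z. z \<in> N \<Longrightarrow> d \<le> (norm (x - z))\<^sup>2"
    and yk: "\<And>k. (norm (x - y k))\<^sup>2 < d + inverse (real (Suc k))"
  shows "Cauchy y"
proof (rule metric_CauchyI)
  text \<open>The parallelogram law at \<open>x - y m\<close>, \<open>x - y k\<close> with midpoint in \<open>N\<close>.\<close>
  have close: "(norm (y m - y k))\<^sup>2 \<le> 2 * inverse (real (Suc m)) + 2 * inverse (real (Suc k))" for m k
  proof -
    define mid where "mid = (1/2::real) *\<^sub>R (y m + y k)"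
    have "mid \<in> N"
      unfolding mid_def using convexD[OF assms(1) y[of m] y[of k], of "1/2" "1/2"]
      by (simp add: scaleR_right_distrib)
    have "(x - y m) + (x - y k) = 2 *\<^sub>R (x - mid)"
      by (simp add: mid_def scaleR_right_diff_distrib scaleR_right_distrib scaleR_2 algebra_simps)
    then have "(norm ((x - y m) + (x - y k)))\<^sup>2 = 4 * (norm (x - mid))\<^sup>2"
      by (simp add: power2_eq_square)
    with d[OF \<open>mid \<in> N\<close>] parallelogram_law[of "x - y m" "x - y k"] yk[of m] yk[of k]
    show ?thesis by (simp add: norm_minus_commute)
  qed
  fix e :: real assume "0 < e"
  then obtain M where M: "inverse (real (Suc M)) < e\<^sup>2 / 4"
    using reals_Archimedean[of "e\<^sup>2 / 4"] by auto
  have "norm (y m - y k) < e" if "M \<le> m" "M \<le> k" for m k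
  proof -
    have "inverse (real (Suc m)) \<le> inverse (real (Suc M))" "inverse (real (Suc k)) \<le> inverse (real (Suc M))"
      using that by (simp_all add: le_imp_inverse_le)
    with close[of m k] M have "(norm (y m - y k))\<^sup>2 < e\<^sup>2" by linarith
    with \<open>0 < e\<close> show ?thesis by (simp add: power_less_imp_less_base)
  qed
  then show "\<exists>M. \<forall>m\<ge>M. \<forall>k\<ge>M. dist (y m) (y k) < e" by (auto simp: dist_norm)
qed

lemma nearest_point_exists:
  fixes x :: "'a::chilbert_space"
  assumes N: "closed N" "convex N" "N \<noteq> {}"
  shows "\<exists>y\<in>N. \<forall>z\<in>N. norm (x - y) \<le> norm (x - z)"
proof -
  define d where "d = Inf ((\<lambda>z. (norm (x - z))\<^sup>2) ` N)"
  have d_le: "d \<le> (norm (x - z))\<^sup>2" if "z \<in> N" for z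
    unfolding d_def by (rule cInf_lower) (use that in \<open>auto intro: bdd_belowI[of _ 0]\<close>)
  have "\<exists>y\<in>N. (norm (x - y))\<^sup>2 < d + inverse (real (Suc k))" for k
    using cInf_lessD[of "(\<lambda>z. (norm (x - z))\<^sup>2) ` N" "d + inverse (real (Suc k))"] N(3)
    by (auto simp: d_def)
  then obtain y where yN: "\<And>k. y k \<in> N" and yk: "\<And>k. (norm (x - y k))\<^sup>2 < d + inverse (real (Suc k))"
    by metis
  from minimizing_sequence_Cauchy[OF N(2) yN d_le yk]
  obtain y0 where lim: "y \<longlonglongrightarrow> y0" using Cauchy_convergent_iff convergent_def by blast
  have "y0 \<in> N" using closed_sequentially[OF N(1)] yN lim by blast
  moreover have "(norm (x - y0))\<^sup>2 \<le> d"
  proof (rule LIMSEQ_le)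
    show "(\<lambda>k. (norm (x - y k))\<^sup>2) \<longlonglongrightarrow> (norm (x - y0))\<^sup>2" by (intro tendsto_intros lim)
    show "(\<lambda>k. d + inverse (real (Suc k))) \<longlonglongrightarrow> d"
      using tendsto_add[OF tendsto_const LIMSEQ_inverse_real_of_nat, of d] by simp
  qed (use yk less_imp_le in blast)
  ultimately show ?thesis using d_le by (metis order_trans norm_ge_zero power2_le_imp_le)
qed

lemma nearest_point_orthogonal:
  assumes N: "cv.subspace N" "y \<in> N" and near: "\<And>z. z \<in> N \<Longrightarrow> norm (x - y) \<le> norm (x - z)"
    and v: "v \<in> N"
  shows "cinner (x - y) v = 0"
proof -
  define b where "b = cinner (x - y) v"
  define s where "s = inverse ((norm v)\<^sup>2 + 1)"
  have s0: "0 < s" and sv: "s * (norm v)\<^sup>2 \<le> 1"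
    unfolding s_def by (simp_all add: add_pos_nonneg field_simps)
  define t where "t = complex_of_real s * cnj b"
  have "y + t *\<^sub>C v \<in> N" using N v by (simp add: cv.subspace_add cv.subspace_scale)
  from near[OF this] have "(norm (x - y))\<^sup>2 \<le> (norm ((x - y) - t *\<^sub>C v))\<^sup>2"
    by (simp add: diff_diff_eq power_mono)
  also have "\<dots> = (norm (x - y))\<^sup>2 + (cmod t * norm v)\<^sup>2 - 2 * Re (cinner (x - y) (t *\<^sub>C v))"
    by (simp add: norm_diff_sq norm_scaleC)
  also have "Re (cinner (x - y) (t *\<^sub>C v)) = s * (cmod b)\<^sup>2"
    using cmod_power2[of b]
    by (simp add: cinner_scaleC_right t_def b_def[symmetric] power2_eq_square algebra_simps)
  also have "(cmod t * norm v)\<^sup>2 = s * (s * (norm v)\<^sup>2) * (cmod b)\<^sup>2"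
    using s0 by (simp add: t_def norm_mult power_mult_distrib power2_eq_square)
  finally have "2 * (s * (cmod b)\<^sup>2) \<le> s * (s * (norm v)\<^sup>2) * (cmod b)\<^sup>2" by simp
  also have "\<dots> \<le> s * 1 * (cmod b)\<^sup>2"
    using sv s0 by (intro mult_right_mono mult_left_mono) auto
  finally show ?thesis using s0 by (simp add: b_def)
qed

lemma riesz_representation:
  fixes f :: "'a::chilbert_space \<Rightarrow> complex"
  assumes add: "\<And>x y. f (x + y) = f x + f y" and scale: "\<And>c x. f (c *\<^sub>C x) = c * f x"
    and bound: "\<And>x. cmod (f x) \<le> K * norm x"
  shows "\<exists>z. \<forall>x. f x = cinner z x"
proof (cases "\<forall>x. f x = 0")
  case True
  then show ?thesis by (intro exI[of _ 0]) simp
next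
  case False
  then obtain x0 where fx0: "f x0 \<noteq> 0" by blast
  define N where "N = {y. f y = 0}"
  have f0: "f 0 = 0" and diff: "f (x - y) = f x - f y" for x y
    using add[of 0 0] add[of "x - y" y] by simp_all
  have "bounded_linear f"
    by (rule bounded_linear_intro[where K = K]) (simp_all add: add scale scaleR_scaleC scaleC_complex_def bound mult.commute)
  then have "closed N"
    unfolding N_def by (intro closed_Collect_eq continuous_intros linear_continuous_on)
  moreover have sub: "cv.subspace N"
    by (simp add: cv.subspace_def N_def f0 add scale)
  moreover have "convex N"
    by (simp add: convex_def N_def add scaleR_scaleC scale)
  ultimately obtain y0 where y0: "y0 \<in> N" and near: "\<And>z. z \<in> N \<Longrightarrow> norm (x0 - y0) \<le> norm (x0 - z)"
    using nearest_point_exists[of N x0] f0 by (auto simp: N_def)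
  define z0 where "z0 = x0 - y0"
  have fz0: "f z0 = f x0" using y0 by (simp add: z0_def diff N_def)
  have orth: "cinner z0 v = 0" if "v \<in> N" for v
    unfolding z0_def by (rule nearest_point_orthogonal[OF sub y0 near that])
  have z0nz: "cinner z0 z0 \<noteq> 0" using fz0 fx0 f0 by (auto simp: cinner_self_eq_zero)
  show ?thesis
  proof (intro exI allI)
    fix x
    have "x - (f x / f z0) *\<^sub>C z0 \<in> N" using fx0 fz0 by (simp add: N_def diff scale)
    then have "cinner z0 (x - (f x / f z0) *\<^sub>C z0) = 0" by (rule orth)
    then have "cinner z0 x = (f x / f z0) * cinner z0 z0"
      by (simp add: cinner_diff_right cinner_scaleC_right)
    then show "f x = cinner (cnj (f z0 / cinner z0 z0) *\<^sub>C z0) x"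
      using z0nz fx0 fz0 by (simp add: cinner_scaleC_left field_simps)
  qed
qed

lemma cadjoint_eqI:
  assumes "\<And>x y. cinner (S x) y = cinner x (T y)"
  shows "cadjoint T = S"
  unfolding cadjoint_def
proof (rule the_equality)
  fix S' assume S': "\<forall>x y. cinner (S' x) y = cinner x (T y)"
  show "S' = S"
  proof
    fix x show "S' x = S x" by (rule cinner_ext_left) (simp add: S' assms)
  qed
qed (use assms in blast)

lemma cadjoint_cinner:
  assumes "bounded_clinear T"
  shows "cinner (cadjoint T x) y = cinner x (T y)"
proof -
  obtain K where K: "\<And>x. norm (T x) \<le> norm x * K" using assms by (auto simp: bounded_clinear_def)
  have "\<exists>z. \<forall>y. cinner x (T y) = cinner z y" for x
  proof (rule riesz_representation[where K = "norm x * K"])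
    show "cmod (cinner x (T y)) \<le> norm x * K * norm y" for y
      using cinner_cauchy_schwarz[of x "T y"] K[of y]
      by (metis mult.assoc mult.commute mult_left_mono norm_ge_zero order_trans)
  qed (use bounded_clinear_clinear[OF assms] in \<open>simp_all add: clinear_add clinear_scaleC cinner_add_right cinner_scaleC_right\<close>)
  then obtain S where "\<And>x y. cinner (S x) y = cinner x (T y)" by metis
  moreover from this have "cadjoint T = S" by (rule cadjoint_eqI)
  ultimately show ?thesis by simp
qed

lemma cadjoint_clinear:
  assumes "bounded_clinear T"
  shows "clinear (cadjoint T)"
  unfolding clinear_def
proof (intro conjI allI)
  show "cadjoint T (x + y) = cadjoint T x + cadjoint T y" for x y
    by (rule cinner_ext_left) (simp add: cadjoint_cinner[OF assms] cinner_add_left)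
  show "cadjoint T (c *\<^sub>C x) = c *\<^sub>C cadjoint T x" for c x
    by (rule cinner_ext_left) (simp add: cadjoint_cinner[OF assms] cinner_scaleC_left)
qed

lemma abs_summable_on_product_bound:
  fixes w :: "nat \<times> nat \<Rightarrow> 'a::real_normed_vector"
  assumes w: "\<And>i j. norm (w (i, j)) \<le> a i * b j"
    and a: "\<And>i. 0 \<le> a i" "summable a" and b: "\<And>j. 0 \<le> b j" "summable b"
  shows "w abs_summable_on UNIV"
  unfolding abs_summable_iff_bdd_above
proof (rule bdd_aboveI2)
  fix F :: "(nat \<times> nat) set" assume "F \<in> {F. F \<subseteq> UNIV \<and> finite F}"
  then have "finite (fst ` F \<union> snd ` F)" by simp
  then obtain N where N: "fst ` F \<union> snd ` F \<subseteq> {..<N}" using finite_nat_bounded by blast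
  have "(\<Sum>p\<in>F. norm (w p)) \<le> (\<Sum>p\<in>F. a (fst p) * b (snd p))"
    using w by (intro sum_mono) (metis prod.collapse)
  also have "\<dots> \<le> (\<Sum>p\<in>{..<N} \<times> {..<N}. a (fst p) * b (snd p))"
  proof (rule sum_mono2)
    show "F \<subseteq> {..<N} \<times> {..<N}"
    proof
      fix p assume "p \<in> F"
      then have "fst p \<in> {..<N}" "snd p \<in> {..<N}" using N by auto
      then show "p \<in> {..<N} \<times> {..<N}" by (simp add: mem_Times_iff)
    qed
  qed (simp_all add: a(1) b(1))
  also have "\<dots> = (\<Sum>i<N. a i) * (\<Sum>j<N. b j)"
    unfolding sum_product sum.cartesian_product by (simp add: case_prod_beta)
  also have "\<dots> \<le> suminf a * suminf b"
  proof (rule mult_mono)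
    show "(\<Sum>i<N. a i) \<le> suminf a" using a by (intro sum_le_suminf) auto
    show "(\<Sum>j<N. b j) \<le> suminf b" using b by (intro sum_le_suminf) auto
    show "0 \<le> suminf a" using a by (intro suminf_nonneg) auto
    show "0 \<le> (\<Sum>j<N. b j)" using b by (intro sum_nonneg) auto
  qed
  finally show "(\<Sum>p\<in>F. norm (w p)) \<le> suminf a * suminf b" .
qed

lemma suminf_suminf_eq_suminf_diagonal:
  fixes w :: "nat \<Rightarrow> nat \<Rightarrow> 'a::banach"
  assumes bound: "\<And>i j. norm (w i j) \<le> a i * b j"
    and a: "\<And>i. 0 \<le> a i" "summable a" and b: "\<And>j. 0 \<le> b j" "summable b"
  shows "(\<Sum>i. \<Sum>j. w i j) = (\<Sum>m. \<Sum>i\<le>m. w i (m - i))"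
proof -
  have suminf_eq: "suminf f = infsum f UNIV" if "f summable_on UNIV" for f :: "nat \<Rightarrow> 'a"
    using has_sum_imp_sums[OF has_sum_infsum[OF that]] by (simp add: sums_iff)
  have "(\<lambda>(i, j). w i j) abs_summable_on UNIV"
    by (rule abs_summable_on_product_bound[OF _ a b]) (simp add: bound)
  then have summable: "(\<lambda>(i, j). w i j) summable_on UNIV \<times> UNIV"
    using abs_summable_summable by simp
  have rows: "w i summable_on UNIV" for i
  proof (rule norm_summable_imp_summable_on)
    show "summable (\<lambda>j. norm (w i j))"
      by (rule summable_comparison_test[OF _ summable_mult[OF b(2), of "a i"]]) (use bound in auto)
  qed
  text \<open>Reindex \<open>(i, j)\<close> by the diagonal \<open>m = i + j\<close> and the position \<open>i \<le> m\<close> on it.\<close>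
  have reindex: "(\<lambda>(i, j). w i j) summable_on UNIV \<times> UNIV \<longleftrightarrow>
      (\<lambda>(m, i). w i (m - i)) summable_on Sigma UNIV atMost"
    "infsum (\<lambda>(i, j). w i j) (UNIV \<times> UNIV) = infsum (\<lambda>(m, i). w i (m - i)) (Sigma UNIV atMost)"
    by (rule summable_on_reindex_bij_witness[where i = "\<lambda>(m, i). (i, m - i)" and j = "\<lambda>(i, j). (i + j, i)"]
        infsum_reindex_bij_witness[where i = "\<lambda>(m, i). (i, m - i)" and j = "\<lambda>(i, j). (i + j, i)"];
        auto)+
  with summable have diag: "(\<lambda>(m, i). w i (m - i)) summable_on Sigma UNIV atMost" by simp
  have "(\<Sum>i. \<Sum>j. w i j) = infsum (\<lambda>i. infsum (w i) UNIV) UNIV"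
    using suminf_eq[OF rows] suminf_eq[OF summable_on_Sigma_banach[OF summable]] by simp
  also have "\<dots> = infsum (\<lambda>(m, i). w i (m - i)) (Sigma UNIV atMost)"
    by (simp only: infsum_Sigma'_banach[OF summable] reindex(2))
  also have "\<dots> = infsum (\<lambda>m. infsum (\<lambda>i. w i (m - i)) {..m}) UNIV"
    by (rule infsum_Sigma'_banach[OF diag, symmetric])
  also have "\<dots> = (\<Sum>m. \<Sum>i\<le>m. w i (m - i))"
    using suminf_eq[OF summable_on_Sigma_banach[OF diag]] by simp
  finally show ?thesis .
qed

section \<open>Square roots of positive operators\<close>

lemma gbinomial_Suc_eq: "(a::real) gchoose (Suc k) = (a gchoose k) * (a - of_nat k) / of_nat (Suc k)"
  using gbinomial_mult_1[of a k] by (simp add: field_simps del: of_nat_Suc)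

text \<open>Taylor coefficients of \<open>\<surd>(1 - t)\<close>.\<close>
definition sqrt_coeff :: "nat \<Rightarrow> real" where
  "sqrt_coeff k = ((1/2::real) gchoose k) * (-1)^k"

lemma sqrt_coeff_0 [simp]: "sqrt_coeff 0 = 1"
  by (simp add: sqrt_coeff_def)

lemma sqrt_coeff_Suc: "sqrt_coeff (Suc k) = sqrt_coeff k * (of_nat k - 1/2) / of_nat (Suc k)"
  unfolding sqrt_coeff_def gbinomial_Suc_eq by (simp add: field_simps del: of_nat_Suc)

lemma sqrt_coeff_Suc_nonpos: "sqrt_coeff (Suc k) \<le> 0"
proof (induction k)
  case (Suc k)
  have "0 \<le> (of_nat (Suc k) - 1/2 :: real) / of_nat (Suc (Suc k))" by simp
  with Suc have "sqrt_coeff (Suc k) * ((of_nat (Suc k) - 1/2) / of_nat (Suc (Suc k))) \<le> 0"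
    by (intro mult_nonpos_nonneg)
  then show ?case unfolding sqrt_coeff_Suc[of "Suc k"] by simp
qed (simp add: sqrt_coeff_Suc)

lemma sqrt_coeff_partial_sum_nonneg: "0 \<le> (\<Sum>k\<le>N. sqrt_coeff k)"
proof -
  have "(\<Sum>k\<le>N. sqrt_coeff k) = (-1)^N * ((1/2 - 1) gchoose N)"
    unfolding sqrt_coeff_def by (rule gbinomial_sum_lower_neg)
  also have "0 \<le> (-1::real)^N * ((1/2 - 1) gchoose N)"
  proof (induction N)
    case (Suc N)
    have "(-1::real)^(Suc N) * ((1/2 - 1) gchoose Suc N) =
          ((-1)^N * ((1/2 - 1) gchoose N)) * ((of_nat N + 1/2) / of_nat (Suc N))"
      unfolding gbinomial_Suc_eq by (simp add: field_simps del: of_nat_Suc)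
    also have "0 \<le> \<dots>" by (rule mult_nonneg_nonneg[OF Suc.IH]) simp
    finally show ?case .
  qed simp
  finally show ?thesis .
qed

text \<open>The Cauchy square of the series is \<open>1 - t\<close>, by Vandermonde's identity.\<close>
lemma sqrt_coeff_convolution:
  "(\<Sum>i\<le>m. sqrt_coeff i * sqrt_coeff (m - i)) = (if m = 0 then 1 else if m = 1 then -1 else 0)"
proof -
  have "sqrt_coeff i * sqrt_coeff (m - i) = (-1)^m * (((1/2::real) gchoose i) * ((1/2) gchoose (m - i)))"
    if "i \<le> m" for i
  proof -
    have "(-1::real)^i * (-1)^(m - i) = (-1)^m" using that by (simp flip: power_add)
    moreover have "sqrt_coeff i * sqrt_coeff (m - i) =
        (((1/2::real) gchoose i) * ((1/2) gchoose (m - i))) * ((-1)^i * (-1)^(m - i))"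
      unfolding sqrt_coeff_def by (simp only: mult_ac)
    ultimately show ?thesis by (simp only: mult.commute)
  qed
  then have "(\<Sum>i\<le>m. sqrt_coeff i * sqrt_coeff (m - i)) =
        (-1)^m * (\<Sum>i\<le>m. ((1/2::real) gchoose i) * ((1/2) gchoose (m - i)))"
    by (simp add: sum_distrib_left)
  also have "\<dots> = (-1)^m * of_nat (1 choose m)"
    using gbinomial_Vandermonde[of "1/2::real" "1/2" m] binomial_gbinomial[of 1 m, where 'a = real]
    by (simp add: atMost_atLeast0)
  also have "\<dots> = (if m = 0 then 1 else if m = 1 then -1 else 0)"
    by (cases "m \<le> 1") (auto simp: le_Suc_eq binomial_eq_0)
  finally show ?thesis .
qed

lemma sqrt_coeff_abs_partial_sum_le: "(\<Sum>k<N. \<bar>sqrt_coeff k\<bar>) \<le> 2"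
proof (cases N)
  case (Suc M)
  have "(\<Sum>k\<le>M. \<bar>sqrt_coeff k\<bar>) + (\<Sum>k\<le>M. sqrt_coeff k) = 2"
  proof (induction M)
    case (Suc M)
    then show ?case using sqrt_coeff_Suc_nonpos[of M] by simp
  qed simp
  with Suc sqrt_coeff_partial_sum_nonneg[of M] show ?thesis by (simp add: lessThan_Suc_atMost)
qed simp

lemma summable_abs_sqrt_coeff: "summable (\<lambda>k. \<bar>sqrt_coeff k\<bar>)"
  by (rule summableI_nonneg_bounded[where x = 2]) (auto simp: sqrt_coeff_abs_partial_sum_le)

instance chilbert_space \<subseteq> banach ..

text \<open>For \<open>0 \<le> A \<le> \<lambda> I\<close> the operator \<open>B = I - A/\<lambda>\<close> satisfies \<open>0 \<le> B \<le> I\<close>, so the binomial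
  series \<open>U = \<Sum>\<^sub>k sqrt_coeff k B\<^sup>k\<close> of \<open>\<surd>(I - B)\<close> converges in norm, and \<open>\<surd>\<lambda> U\<close> is a positive
  square root of \<open>A\<close>.\<close>
locale sqrt_construction =
  fixes A :: "'a::chilbert_space \<Rightarrow> 'a" and lam :: real
  assumes positive: "positive_op A" and lam_pos: "0 < lam"
    and norm_le: "\<And>x. norm (A x) \<le> lam * norm x"
begin

definition B :: "'a \<Rightarrow> 'a" where
  "B x = x - (1/lam) *\<^sub>R A x"

definition U :: "'a \<Rightarrow> 'a" where
  "U x = (\<Sum>k. sqrt_coeff k *\<^sub>R (B ^^ k) x)"

definition sqrt_op :: "'a \<Rightarrow> 'a" where
  "sqrt_op x = sqrt lam *\<^sub>R U x"

lemma clinear_A: "clinear A"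
  using positive by (simp add: positive_op_iff bounded_clinear_clinear)

lemma positive_form_A: "positive_form A"
  using positive by (simp add: positive_op_iff)

lemma clinear_B: "clinear B"
  unfolding B_def[abs_def] by (intro clinear_diff_fun clinear_ident clinear_scaleR_fun clinear_A)

lemma Re_cinner_B: "Re (cinner x (B x)) = (norm x)\<^sup>2 - (1/lam) * Re (cinner x (A x))"
  by (simp add: B_def cinner_diff_right cinner_scaleR_right cinner_self_Re)

lemma positive_form_B: "positive_form B"
  unfolding positive_form_def
proof
  fix x
  have "Re (cinner x (A x)) \<le> norm x * norm (A x)"
    using complex_Re_le_cmod order_trans cinner_cauchy_schwarz by blast
  also have "\<dots> \<le> norm x * (lam * norm x)" by (rule mult_left_mono[OF norm_le]) simp
  also have "\<dots> = lam * (norm x)\<^sup>2" by (simp add: power2_eq_square)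
  finally have "(1/lam) * Re (cinner x (A x)) \<le> (norm x)\<^sup>2"
    using lam_pos by (simp add: field_simps)
  then show "Im (cinner x (B x)) = 0 \<and> 0 \<le> Re (cinner x (B x))"
    using positive_formD_Im[OF positive_form_A, of x]
    by (simp add: Re_cinner_B B_def cinner_diff_right cinner_scaleR_right cinner_self_Im cinner_self_Re)
qed

lemma Re_cinner_B_le: "Re (cinner x (B x)) \<le> (norm x)\<^sup>2"
  using positive_formD_Re[OF positive_form_A, of x] lam_pos by (simp add: Re_cinner_B)

lemma norm_B_le: "norm (B x) \<le> norm x"
proof -
  have "cmod (cinner x (B (B x))) = (norm (B x))\<^sup>2"
    by (simp only: positive_form_selfadjoint[OF clinear_B positive_form_B, symmetric] cinner_self_norm
        norm_of_real abs_power2)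
  then have "((norm (B x))\<^sup>2)\<^sup>2 = (cmod (cinner x (B (B x))))\<^sup>2" by simp
  also have "\<dots> \<le> Re (cinner x (B x)) * Re (cinner (B x) (B (B x)))"
    by (rule positive_form_cauchy_schwarz[OF clinear_B positive_form_B])
  also have "\<dots> \<le> (norm x)\<^sup>2 * (norm (B x))\<^sup>2"
    using Re_cinner_B_le positive_formD_Re[OF positive_form_B] by (intro mult_mono) auto
  finally have "(norm (B x))\<^sup>2 * (norm (B x))\<^sup>2 \<le> (norm x)\<^sup>2 * (norm (B x))\<^sup>2"
    by (simp add: power2_eq_square[of "(norm (B x))\<^sup>2"])
  then have "(norm (B x))\<^sup>2 \<le> (norm x)\<^sup>2 \<or> norm (B x) = 0"
    by (metis mult_right_le_imp_le zero_less_power2 norm_eq_zero)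
  then show ?thesis by (auto intro: power2_le_imp_le)
qed

lemma clinear_B_power: "clinear (B ^^ k)"
  by (induction k) (simp_all add: clinear_ident clinear_compose[OF clinear_B])

lemma norm_B_power_le: "norm ((B ^^ k) x) \<le> norm x"
  by (induction k) (auto intro: order_trans[OF norm_B_le])

lemma bounded_linear_B_power: "bounded_linear (B ^^ k)"
  by (rule bounded_linear_intro[where K = 1])
     (simp_all add: clinear_add[OF clinear_B_power] clinear_scaleR[OF clinear_B_power] norm_B_power_le)

lemma B_power_selfadjoint: "cinner ((B ^^ k) x) y = cinner x ((B ^^ k) y)"
proof (induction k arbitrary: x y)
  case (Suc k)
  have "cinner ((B ^^ Suc k) x) y = cinner ((B ^^ k) x) (B y)"
    by (simp add: positive_form_selfadjoint[OF clinear_B positive_form_B])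
  also have "\<dots> = cinner x ((B ^^ Suc k) y)" by (simp add: Suc funpow_swap1)
  finally show ?case .
qed simp

lemma Im_cinner_B_power: "Im (cinner x ((B ^^ k) x)) = 0"
  using B_power_selfadjoint[of k x x] cinner_commute[of "(B ^^ k) x" x] by (simp add: complex_eq_iff)

lemma Re_cinner_B_power_le: "Re (cinner x ((B ^^ k) x)) \<le> (norm x)\<^sup>2"
proof -
  have "Re (cinner x ((B ^^ k) x)) \<le> norm x * norm ((B ^^ k) x)"
    using complex_Re_le_cmod order_trans cinner_cauchy_schwarz by blast
  also have "\<dots> \<le> (norm x)\<^sup>2" by (simp add: norm_B_power_le mult_left_mono power2_eq_square)
  finally show ?thesis .
qed

lemma summable_norm_U_terms: "summable (\<lambda>k. norm (sqrt_coeff k *\<^sub>R (B ^^ k) x))"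
  by (rule summable_comparison_test[OF _ summable_mult2[OF summable_abs_sqrt_coeff, of "norm x"]])
     (auto intro!: mult_left_mono simp: norm_B_power_le)

lemma summable_U_terms: "summable (\<lambda>k. sqrt_coeff k *\<^sub>R (B ^^ k) x)"
  by (rule summable_norm_cancel[OF summable_norm_U_terms])

lemma norm_U_le: "norm (U x) \<le> 2 * norm x"
proof -
  have "norm (U x) \<le> (\<Sum>k. norm (sqrt_coeff k *\<^sub>R (B ^^ k) x))"
    unfolding U_def by (rule summable_norm[OF summable_norm_U_terms])
  also have "\<dots> \<le> (\<Sum>k. \<bar>sqrt_coeff k\<bar> * norm x)"
    by (intro suminf_le summable_norm_U_terms summable_mult2[OF summable_abs_sqrt_coeff])
       (simp add: norm_B_power_le mult_left_mono)
  also have "\<dots> \<le> 2 * norm x"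
    by (intro suminf_le_const summable_mult2[OF summable_abs_sqrt_coeff])
       (simp add: mult_right_mono sqrt_coeff_abs_partial_sum_le flip: sum_distrib_right)
  finally show ?thesis .
qed

lemma clinear_U: "clinear U"
  unfolding clinear_def
proof (intro conjI allI)
  show "U (x + y) = U x + U y" for x y
    unfolding U_def
    by (simp add: suminf_add[OF summable_U_terms summable_U_terms] clinear_add[OF clinear_B_power]
        scaleR_right_distrib)
  have "bounded_linear (\<lambda>x::'a. c *\<^sub>C x)" for c
    by (rule bounded_linear_intro[where K = "cmod c"])
       (simp_all add: scaleC_add_right scaleR_scaleC scaleC_scaleC norm_scaleC mult.commute)
  from bounded_linear.suminf[OF this summable_U_terms]
  show "U (c *\<^sub>C x) = c *\<^sub>C U x" for c x
    unfolding U_def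
    by (simp add: clinear_scaleC[OF clinear_B_power] scaleR_scaleC scaleC_scaleC mult.commute)
qed

lemma U_commute:
  assumes R: "bounded_clinear R" and RA: "\<And>x. R (A x) = A (R x)"
  shows "R (U x) = U (R x)"
proof -
  have "R (B x) = B (R x)" for x
    by (simp add: B_def clinear_diff[OF bounded_clinear_clinear[OF R]]
        clinear_scaleR[OF bounded_clinear_clinear[OF R]] RA)
  then have RB: "R ((B ^^ k) x) = (B ^^ k) (R x)" for k x
    by (induction k) simp_all
  show ?thesis
    unfolding U_def bounded_linear.suminf[OF bounded_clinear_bounded_linear[OF R] summable_U_terms]
    by (simp add: clinear_scaleR[OF bounded_clinear_clinear[OF R]] RB)
qed

lemma cinner_U_sums: "(\<lambda>k. sqrt_coeff k * Re (cinner x ((B ^^ k) x))) sums Re (cinner x (U x))"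
  and Im_cinner_U: "Im (cinner x (U x)) = 0"
proof -
  have "(\<lambda>k. cinner x (sqrt_coeff k *\<^sub>R (B ^^ k) x)) sums cinner x (U x)"
    unfolding U_def by (rule bounded_linear.sums[OF bounded_linear_cinner_right summable_sums[OF summable_U_terms]])
  then have "(\<lambda>k. complex_of_real (sqrt_coeff k) * cinner x ((B ^^ k) x)) sums cinner x (U x)"
    by (simp add: cinner_scaleR_right)
  from bounded_linear.sums[OF bounded_linear_Re this] bounded_linear.sums[OF bounded_linear_Im this]
  show "(\<lambda>k. sqrt_coeff k * Re (cinner x ((B ^^ k) x))) sums Re (cinner x (U x))"
    and "Im (cinner x (U x)) = 0"
    by (simp_all add: Im_cinner_B_power sums_iff)
qed

text \<open>All coefficients but the first are \<open>\<le> 0\<close> and \<open>\<langle>x, B\<^sup>k x\<rangle> \<le> \<parallel>x\<parallel>\<^sup>2\<close>, so the partial sums of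
  \<open>\<langle>x, U x\<rangle>\<close> dominate \<open>(\<Sum>\<^sub>k\<^sub><\<^sub>n sqrt_coeff k) \<parallel>x\<parallel>\<^sup>2 \<ge> 0\<close>.\<close>
lemma Re_cinner_U_nonneg: "0 \<le> Re (cinner x (U x))"
proof (rule LIMSEQ_le_const[OF cinner_U_sums[unfolded sums_def]], intro exI allI impI)
  fix n :: nat
  have termwise: "sqrt_coeff k * (norm x)\<^sup>2 \<le> sqrt_coeff k * Re (cinner x ((B ^^ k) x))" for k
  proof (cases k)
    case (Suc j)
    then show ?thesis
      using sqrt_coeff_Suc_nonpos[of j] Re_cinner_B_power_le[of x k] by (intro mult_left_mono_neg) auto
  qed (simp add: cinner_self_Re)
  have "0 \<le> (\<Sum>k<n. sqrt_coeff k)"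
    using sqrt_coeff_partial_sum_nonneg by (cases n) (simp_all add: lessThan_Suc_atMost)
  then have "0 \<le> (\<Sum>k<n. sqrt_coeff k) * (norm x)\<^sup>2" by simp
  also have "\<dots> \<le> (\<Sum>k<n. sqrt_coeff k * Re (cinner x ((B ^^ k) x)))"
    unfolding sum_distrib_right by (intro sum_mono termwise)
  finally show "0 \<le> (\<Sum>k<n. sqrt_coeff k * Re (cinner x ((B ^^ k) x)))" .
qed

lemma U_U: "U (U x) = x - B x"
proof -
  let ?c = sqrt_coeff
  define w where "w i j = (?c i * ?c j) *\<^sub>R (B ^^ (i + j)) x" for i j
  have row: "?c i *\<^sub>R (B ^^ i) (U x) = (\<Sum>j. w i j)" for i
  proof -
    have "(B ^^ i) (U x) = (\<Sum>j. (B ^^ i) (?c j *\<^sub>R (B ^^ j) x))"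
      unfolding U_def by (rule bounded_linear.suminf[OF bounded_linear_B_power summable_U_terms])
    also have "\<dots> = (\<Sum>j. ?c j *\<^sub>R (B ^^ (i + j)) x)"
      by (simp add: clinear_scaleR[OF clinear_B_power] funpow_add)
    finally show ?thesis
      using suminf_scaleR_right[OF summable_U_terms[of "(B ^^ i) x"], of "?c i"]
      by (simp add: w_def funpow_add add.commute[of i])
  qed
  have "U (U x) = (\<Sum>i. \<Sum>j. w i j)"
    by (simp add: U_def[of "U x"] row)
  also have "\<dots> = (\<Sum>m. \<Sum>i\<le>m. w i (m - i))"
  proof (rule suminf_suminf_eq_suminf_diagonal)
    fix i j
    have "norm (w i j) = (\<bar>?c i\<bar> * \<bar>?c j\<bar>) * norm ((B ^^ (i + j)) x)"
      by (simp add: w_def abs_mult)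
    also have "\<dots> \<le> (\<bar>?c i\<bar> * \<bar>?c j\<bar>) * norm x"
      by (intro mult_left_mono norm_B_power_le) simp
    finally show "norm (w i j) \<le> (\<bar>?c i\<bar> * norm x) * \<bar>?c j\<bar>" by (simp only: mult_ac)
  qed (simp_all add: summable_abs_sqrt_coeff summable_mult2)
  also have "\<dots> = (\<Sum>m. (\<Sum>i\<le>m. ?c i * ?c (m - i)) *\<^sub>R (B ^^ m) x)"
    by (simp add: w_def scaleR_sum_left)
  also have "\<dots> = (\<Sum>m\<in>{0, 1}. (\<Sum>i\<le>m. ?c i * ?c (m - i)) *\<^sub>R (B ^^ m) x)"
    by (rule suminf_finite) (simp_all add: sqrt_coeff_convolution)
  also have "\<dots> = x - B x"
    by (simp add: sqrt_coeff_convolution)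
  finally show ?thesis .
qed

lemma sqrt_op_sqrt_op: "sqrt_op (sqrt_op x) = A x"
proof -
  have "sqrt_op (sqrt_op x) = (sqrt lam * sqrt lam) *\<^sub>R (x - B x)"
    by (simp add: sqrt_op_def clinear_scaleR[OF clinear_U] U_U)
  also have "\<dots> = A x"
    using lam_pos by (simp add: B_def)
  finally show ?thesis .
qed

lemma clinear_sqrt_op: "clinear sqrt_op"
  unfolding sqrt_op_def[abs_def] by (rule clinear_scaleR_fun[OF clinear_U])

lemma positive_op_sqrt_op: "positive_op sqrt_op"
  unfolding positive_op_iff bounded_clinear_def positive_form_def
proof (intro conjI allI exI)
  show "sqrt_op (x + y) = sqrt_op x + sqrt_op y" "sqrt_op (c *\<^sub>C x) = c *\<^sub>C sqrt_op x" for x y c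
    using clinear_sqrt_op by (simp_all add: clinear_def)
  show "norm (sqrt_op x) \<le> norm x * (2 * sqrt lam)" for x
    using lam_pos norm_U_le[of x] by (simp add: sqrt_op_def mult_left_mono mult_ac)
  show "Im (cinner x (sqrt_op x)) = 0" "0 \<le> Re (cinner x (sqrt_op x))" for x
    using Im_cinner_U[of x] Re_cinner_U_nonneg[of x] lam_pos by (simp_all add: sqrt_op_def cinner_scaleR_right)
qed

text \<open>Uniqueness: a positive square root \<open>R\<close> of \<open>A\<close> commutes with \<open>A\<close>, hence with \<open>sqrt_op\<close>;
  then \<open>y = sqrt_op x - R x\<close> satisfies \<open>(sqrt_op + R) y = 0\<close>, which forces \<open>sqrt_op y = R y = 0\<close>
  and so \<open>\<parallel>y\<parallel>\<^sup>2 = \<langle>y, (sqrt_op - R) x\<rangle> = 0\<close>.\<close>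
lemma positive_sqrt_unique:
  assumes R: "positive_op R" and RR: "R \<circ> R = A"
  shows "R = sqrt_op"
proof
  fix x
  let ?S = sqrt_op
  have Rb: "bounded_clinear R" and Rc: "clinear R" and Rp: "positive_form R"
    and Sc: "clinear ?S" and Sp: "positive_form ?S"
    using R positive_op_sqrt_op clinear_sqrt_op by (auto simp: positive_op_iff bounded_clinear_clinear)
  have RRx: "R (R x) = A x" for x using fun_cong[OF RR, of x] by simp
  have RS: "R (?S x) = ?S (R x)" for x
    unfolding sqrt_op_def by (simp add: clinear_scaleR[OF Rc] U_commute[OF Rb] flip: RRx)
  define y where "y = ?S x - R x"
  have "?S y + R y = 0"
    by (simp add: y_def clinear_diff[OF Sc] clinear_diff[OF Rc] sqrt_op_sqrt_op RRx RS)
  then have "Re (cinner y (?S y)) + Re (cinner y (R y)) = 0"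
    by (metis cinner_add_right cinner_zero_right plus_complex.sel(1) zero_complex.sel(1))
  then have "Re (cinner y (?S y)) = 0" "Re (cinner y (R y)) = 0"
    using positive_formD_Re[OF Sp, of y] positive_formD_Re[OF Rp, of y] by linarith+
  then have "?S y = 0" "R y = 0"
    using positive_form_zero_imp_zero[OF Sc Sp] positive_form_zero_imp_zero[OF Rc Rp] by blast+
  then have "cinner y y = 0"
    by (simp add: y_def cinner_diff_right positive_form_selfadjoint[OF Sc Sp, symmetric]
        positive_form_selfadjoint[OF Rc Rp, symmetric])
  then show "R x = ?S x" by (simp add: y_def cinner_self_eq_zero)
qed

lemma op_sqrt_eq: "op_sqrt A = sqrt_op"
  unfolding op_sqrt_def
  by (rule the_equality) (auto simp: positive_op_sqrt_op sqrt_op_sqrt_op positive_sqrt_unique)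

end

lemma
  assumes "positive_op (A :: 'a::chilbert_space \<Rightarrow> 'a)"
  shows positive_op_op_sqrt: "positive_op (op_sqrt A)"
    and op_sqrt_op_sqrt: "op_sqrt A (op_sqrt A x) = A x"
proof -
  obtain K where K: "\<And>x. norm (A x) \<le> norm x * K"
    using assms by (auto simp: positive_op_def bounded_clinear_def)
  have "norm (A x) \<le> (\<bar>K\<bar> + 1) * norm x" for x
    using K[of x] by (smt (verit) mult.commute mult_right_mono norm_ge_zero)
  then interpret sqrt_construction A "\<bar>K\<bar> + 1"
    using assms by unfold_locales auto
  show "positive_op (op_sqrt A)" "op_sqrt A (op_sqrt A x) = A x"
    by (simp_all add: op_sqrt_eq positive_op_sqrt_op sqrt_op_sqrt_op)
qed

lemma cdim_mono:
  assumes "V \<subseteq> cv.span W"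
  shows "cdim V \<le> cdim W"
  unfolding cdim_def cspan_eq_span
proof (rule SUP_subset_mono)
  have "cv.span V \<subseteq> cv.span W" using cv.span_mono[OF assms] by (simp add: cv.span_span)
  then show "{B. finite B \<and> B \<subseteq> cv.span V \<and> \<not> cv.dependent B} \<subseteq> {B. finite B \<and> B \<subseteq> cv.span W \<and> \<not> cv.dependent B}"
    by auto
qed simp

lemma cdim_inj_image:
  assumes f: "clinear f" and inj: "\<And>x. x \<in> cv.span V \<Longrightarrow> f x = 0 \<Longrightarrow> x = 0"
    and im: "f ` cv.span V \<subseteq> cv.span W"
  shows "cdim V \<le> cdim W"
  unfolding cdim_def cspan_eq_span
proof (rule SUP_mono)
  fix B assume B: "B \<in> {B. finite B \<and> B \<subseteq> cv.span V \<and> \<not> cv.dependent B}"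
  have mh: "module_hom scaleC scaleC f" by (rule clinear_module_hom[OF f])
  have spB: "cv.span B \<subseteq> cv.span V" using B cv.span_mono[of B "cv.span V"] by (auto simp: cv.span_span)
  have injB: "inj_on f (cv.span B)"
  proof (rule inj_onI)
    fix x y assume "x \<in> cv.span B" "y \<in> cv.span B" "f x = f y"
    then have "x - y \<in> cv.span V" "f (x - y) = 0"
      using spB cv.span_diff[of x B y] by (auto simp: clinear_diff[OF f])
    then have "x - y = 0" by (rule inj)
    then show "x = y" by simp
  qed
  have ind: "\<not> cv.dependent (f ` B)"
    using module_hom.independent_injective_image[OF mh, of B] B injB by auto
  have inj2: "inj_on f B" using injB cv.span_superset[of B] by (auto intro: inj_on_subset)
  have "f ` B \<subseteq> cv.span W" using B im by auto
  then have "f ` B \<in> {B. finite B \<and> B \<subseteq> cv.span W \<and> \<not> cv.dependent B}" using B ind by auto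
  moreover have "ennreal (real (card B)) \<le> ennreal (real (card (f ` B)))"
    using card_image[OF inj2] by simp
  ultimately show "\<exists>B'\<in>{B. finite B \<and> B \<subseteq> cv.span W \<and> \<not> cv.dependent B}. ennreal (real (card B)) \<le> ennreal (real (card B'))"
    by blast
qed

lemma cdim_eq_dim:
  assumes "V \<subseteq> cv.span F" "finite F"
  shows "cdim V = ennreal (real (cv.dim V))"
proof -
  obtain BV where BV: "BV \<subseteq> V" "cv.independent BV" "V \<subseteq> cv.span BV" "card BV = cv.dim V"
    using cv.basis_exists by blast
  have finBV: "finite BV" using cv.independent_span_bound[OF assms(2) BV(2)] BV(1) assms(1) by blast
  have le: "card B \<le> cv.dim V" if "finite B" "B \<subseteq> cv.span V" "cv.independent B" for B
  proof -
    have "cv.span V \<subseteq> cv.span BV" using cv.span_mono[OF BV(3)] by (simp add: cv.span_span)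
    then have "B \<subseteq> cv.span BV" using that by auto
    then show ?thesis using cv.independent_span_bound[OF finBV that(3)] BV(4) by simp
  qed
  show ?thesis
    unfolding cdim_def cspan_eq_span
  proof (rule antisym)
    show "(SUP B\<in>{B. finite B \<and> B \<subseteq> cv.span V \<and> \<not> cv.dependent B}. ennreal (real (card B))) \<le> ennreal (real (cv.dim V))"
      by (rule SUP_least) (use le in auto)
    have "BV \<in> {B. finite B \<and> B \<subseteq> cv.span V \<and> \<not> cv.dependent B}"
      using finBV BV cv.span_superset[of V] by auto
    then show "ennreal (real (cv.dim V)) \<le> (SUP B\<in>{B. finite B \<and> B \<subseteq> cv.span V \<and> \<not> cv.dependent B}. ennreal (real (card B)))"
      using BV(4) by (auto intro: SUP_upper2)
  qed
qed

lemma cdim_finite_imp_finite_span: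
  assumes "cdim V < \<infinity>"
  shows "\<exists>B. finite B \<and> V \<subseteq> cv.span B"
proof -
  obtain r where r: "cdim V = ennreal r" "0 \<le> r" using assms by (cases "cdim V") auto
  define P where "P B \<longleftrightarrow> finite B \<and> B \<subseteq> cv.span V \<and> cv.independent B" for B
  have bnd: "card B \<le> nat \<lceil>r\<rceil>" if "P B" for B
  proof -
    have "ennreal (real (card B)) \<le> cdim V"
      unfolding cdim_def cspan_eq_span using that by (intro SUP_upper) (auto simp: P_def)
    then have "real (card B) \<le> r" using r by (simp add: ennreal_le_iff)
    then show ?thesis by linarith
  qed
  have P0: "P {}" using cv.independent_empty by (simp add: P_def)
  have "\<forall>y. P y \<longrightarrow> card y < Suc (nat \<lceil>r\<rceil>)" using bnd by (simp add: less_Suc_eq_le)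
  from Lattices_Big.ex_has_greatest_nat[OF P0 this]
  obtain B where PB: "P B" and maxB: "\<And>B'. P B' \<Longrightarrow> card B' \<le> card B" by blast
  have "V \<subseteq> cv.span B"
  proof
    fix v assume v: "v \<in> V"
    show "v \<in> cv.span B"
    proof (rule ccontr)
      assume nv: "v \<notin> cv.span B"
      then have "v \<notin> B" using cv.span_superset by blast
      have "P (insert v B)"
        using PB v nv cv.span_superset[of V] by (auto simp: P_def cv.independent_insert)
      then have "card (insert v B) \<le> card B" by (rule maxB)
      then show False using \<open>v \<notin> B\<close> PB by (simp add: P_def)
    qed
  qed
  then show ?thesis using PB by (auto simp: P_def)
qed

lemma cinner_span_eq_zero:
  assumes "\<And>g. g \<in> G \<Longrightarrow> cinner x g = 0" "m \<in> cv.span G"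
  shows "cinner x m = 0"
proof -
  have "cv.subspace {m. cinner x m = 0}"
    unfolding cv.subspace_def by (simp add: cinner_add_right cinner_scaleC_right)
  then have "cv.span G \<subseteq> {m. cinner x m = 0}"
    using assms(1) by (intro cv.span_minimal) auto
  with assms(2) show ?thesis by auto
qed

lemma clinear_image_span_subset:
  assumes "clinear f" "f ` BV \<subseteq> cv.span Z"
  shows "f ` cv.span BW \<subseteq> cv.span (Z \<union> f ` (BW - BV))"
proof -
  have "f ` BW \<subseteq> cv.span (Z \<union> f ` (BW - BV))"
    using assms(2) cv.span_mono[of Z "Z \<union> f ` (BW - BV)"] by (auto intro: cv.span_base)
  then show ?thesis
    unfolding clinear_span_image[OF assms(1)] by (rule cv.span_minimal[OF _ cv.subspace_span])
qed

text \<open>Extend a basis \<open>B\<^sub>V\<close> of \<open>V\<close> to a basis \<open>B\<^sub>W\<close> of \<open>W\<close>; since \<open>T\<^sub>i B\<^sub>V \<subseteq> W\<close>, the set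
  \<open>B\<^sub>W \<union> \<Union>\<^sub>i T\<^sub>i (B\<^sub>W - B\<^sub>V)\<close> spans \<open>X\<close>.\<close>
lemma dim_span_images_le:
  fixes T :: "nat \<Rightarrow> 'a::complex_vector \<Rightarrow> 'a"
  assumes T: "\<And>i. i < n \<Longrightarrow> clinear (T i)" and "V \<subseteq> W"
    and W: "W \<subseteq> cv.span F" "finite F"
    and TV: "\<And>i. i < n \<Longrightarrow> T i ` V \<subseteq> W"
    and X: "X \<subseteq> cv.span (W \<union> (\<Union>i<n. T i ` W))"
  shows "cv.dim X \<le> cv.dim W + n * (cv.dim W - cv.dim V)"
proof -
  obtain BV where BV: "BV \<subseteq> V" "cv.independent BV" "V \<subseteq> cv.span BV" "card BV = cv.dim V"
    using cv.basis_exists by blast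
  obtain BW where BW: "BV \<subseteq> BW" "BW \<subseteq> W" "cv.independent BW" "W \<subseteq> cv.span BW"
    using cv.maximal_independent_subset_extend[of BV W] BV(1,2) \<open>V \<subseteq> W\<close> by blast
  have "finite BW" using cv.independent_span_bound[OF W(2) BW(3)] BW(2) W(1) by blast
  define Z where "Z = BW \<union> (\<Union>i<n. T i ` (BW - BV))"
  have "BW \<subseteq> Z" by (simp add: Z_def)
  from BW(4) cv.span_mono[OF this] have WZ: "W \<subseteq> cv.span Z" by (rule order_trans)
  have "T i ` W \<subseteq> cv.span Z" if "i < n" for i
  proof -
    have "T i ` W \<subseteq> T i ` cv.span BW" by (rule image_mono[OF BW(4)])
    also have "\<dots> \<subseteq> cv.span (Z \<union> T i ` (BW - BV))"
      by (rule clinear_image_span_subset[OF T[OF that]])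
         (rule order_trans[OF image_mono[OF BV(1)] order_trans[OF TV[OF that] WZ]])
    also have "Z \<union> T i ` (BW - BV) = Z" using that by (auto simp: Z_def)
    finally show ?thesis .
  qed
  with WZ have "cv.span (W \<union> (\<Union>i<n. T i ` W)) \<subseteq> cv.span Z"
    by (intro cv.span_minimal[OF _ cv.subspace_span]) blast
  with X have "cv.dim X \<le> card Z"
    by (intro cv.dim_le_card) (auto simp: Z_def \<open>finite BW\<close>)
  also have "card Z \<le> card BW + (\<Sum>i<n. card (T i ` (BW - BV)))"
    unfolding Z_def by (intro order_trans[OF card_Un_le] add_left_mono card_UN_le) simp
  also have "\<dots> \<le> card BW + n * (card BW - card BV)"
  proof -
    have "card (T i ` (BW - BV)) \<le> card BW - card BV" for i
      using card_image_le[of "BW - BV" "T i"] \<open>finite BW\<close> BW(1)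
      by (simp add: card_Diff_subset finite_subset)
    then have "(\<Sum>i<n. card (T i ` (BW - BV))) \<le> (\<Sum>i<n. card BW - card BV)"
      by (rule sum_mono)
    then show ?thesis by simp
  qed
  finally show ?thesis using cv.basis_card_eq_dim[OF BW(2,4,3)] BV(4) by simp
qed

section \<open>Growth of the dimensions\<close>

text \<open>If the increments \<open>e\<^sub>k\<close> of \<open>d\<close> satisfy \<open>e\<^sub>k\<^sub>+\<^sub>1 \<le> n e\<^sub>k\<close>, then \<open>e\<^sub>k S\<^sub>k \<le> n\<^sup>k d\<^sub>k\<close> for
  \<open>S\<^sub>k = 1 + n + \<dots> + n\<^sup>k\<close>, and this is exactly \<open>d\<^sub>k\<^sub>+\<^sub>1 / S\<^sub>k\<^sub>+\<^sub>1 \<le> d\<^sub>k / S\<^sub>k\<close>.\<close>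
lemma increments_le_geometric_imp_ratio_Suc_le:
  fixes d e :: "nat \<Rightarrow> nat" and n :: nat
  assumes e_0: "e 0 = d 0" and d_Suc: "\<And>k. d (Suc k) = d k + e (Suc k)"
    and e_Suc: "\<And>k. e (Suc k) \<le> n * e k"
  shows "d (Suc k) * (\<Sum>j\<le>k. n ^ j) \<le> d k * (\<Sum>j\<le>Suc k. n ^ j)"
proof -
  define S where "S k = (\<Sum>j\<le>k. n ^ j)" for k
  have step: "e (Suc k) * S k \<le> n ^ Suc k * d k" if "e k * S k \<le> n ^ k * d k" for k
  proof -
    have "e (Suc k) * S k \<le> n * (e k * S k)"
      using mult_right_mono[OF e_Suc[of k], of "S k"] by (simp add: mult.assoc)
    also have "\<dots> \<le> n * (n ^ k * d k)" using that by simp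
    finally show ?thesis by (simp add: mult.assoc)
  qed
  have bound: "e k * S k \<le> n ^ k * d k" for k
  proof (induction k)
    case (Suc k)
    have "e (Suc k) * S (Suc k) = e (Suc k) * S k + e (Suc k) * n ^ Suc k"
      by (simp add: S_def algebra_simps)
    also have "\<dots> \<le> n ^ Suc k * d k + e (Suc k) * n ^ Suc k" using step[OF Suc.IH] by simp
    also have "\<dots> = n ^ Suc k * d (Suc k)" by (simp add: d_Suc algebra_simps)
    finally show ?case .
  qed (simp add: e_0 S_def)
  have "d (Suc k) * S k = d k * S k + e (Suc k) * S k" by (simp add: d_Suc algebra_simps)
  also have "\<dots> \<le> d k * S k + n ^ Suc k * d k" using step[OF bound] by simp
  also have "\<dots> = d k * S (Suc k)" by (simp add: S_def algebra_simps)
  finally show ?thesis by (simp add: S_def)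
qed

lemma decseq_div_geometric_sum:
  fixes d :: "nat \<Rightarrow> nat" and n :: nat
  assumes mono: "\<And>k. d k \<le> d (Suc k)"
    and growth_0: "d (Suc 0) \<le> d 0 + n * d 0"
    and growth: "\<And>k. d (Suc (Suc k)) \<le> d (Suc k) + n * (d (Suc k) - d k)"
  shows "decseq (\<lambda>k. real (d k) / real (\<Sum>j\<le>k. n ^ j))"
proof -
  define e where "e k = (case k of 0 \<Rightarrow> d 0 | Suc j \<Rightarrow> d (Suc j) - d j)" for k
  have e_Suc: "e (Suc k) \<le> n * e k" for k
  proof (cases k)
    case (Suc j) then show ?thesis using growth[of j] by (simp add: e_def)
  qed (use growth_0 in \<open>simp add: e_def\<close>)
  have d_Suc: "d (Suc k) = d k + e (Suc k)" for k
    using mono[of k] by (simp add: e_def)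
  have "d (Suc k) * (\<Sum>j\<le>k. n ^ j) \<le> d k * (\<Sum>j\<le>Suc k. n ^ j)" for k
    by (rule increments_le_geometric_imp_ratio_Suc_le[of e, OF _ d_Suc e_Suc]) (simp add: e_def)
  then have "real (d (Suc k)) * real (\<Sum>j\<le>k. n ^ j) \<le> real (d k) * real (\<Sum>j\<le>Suc k. n ^ j)" for k
    by (metis of_nat_le_iff of_nat_mult)
  moreover have "0 < (\<Sum>j\<le>k. n ^ j)" for k
    using member_le_sum[of 0 "{..k}" "\<lambda>j. n ^ j"] by simp
  ultimately show ?thesis
    unfolding decseq_Suc_iff by (simp add: field_simps del: of_nat_sum sum.atMost_Suc)
qed

lemma tendsto_geometric_sum_div_power:
  fixes n :: nat
  assumes "2 \<le> n"
  shows "(\<lambda>k. real (\<Sum>j\<le>k. n ^ j) / real (n ^ Suc k)) \<longlonglongrightarrow> 1 / (real n - 1)"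
proof -
  have n1: "0 < real n - 1" using assms by simp
  have eq: "real (\<Sum>j\<le>k. n ^ j) / real (n ^ Suc k) = (1 - (1 / real n) ^ Suc k) / (real n - 1)" for k
  proof -
    have "real (\<Sum>j\<le>k. n ^ j) = (\<Sum>i<Suc k. real n ^ i)" by (simp add: lessThan_Suc_atMost)
    also have "\<dots> = (real n ^ Suc k - 1) / (real n - 1)" by (rule geometric_sum) (use assms in simp)
    finally have a: "real (\<Sum>j\<le>k. n ^ j) = (real n ^ Suc k - 1) / (real n - 1)" .
    have q: "real n ^ Suc k > 0" using assms by simp
    have "real (\<Sum>j\<le>k. n ^ j) / real (n ^ Suc k) = ((real n ^ Suc k - 1) / (real n - 1)) / real n ^ Suc k"
      by (simp only: a of_nat_power)
    also have "\<dots> = (1 - 1 / real n ^ Suc k) / (real n - 1)" using q n1 by (simp add: field_simps)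
    finally show ?thesis by (simp only: power_one_over)
  qed
  have "(\<lambda>k. (1 / real n) ^ Suc k) \<longlonglongrightarrow> 0"
    using LIMSEQ_realpow_zero[of "1 / real n"] assms filterlim_sequentially_Suc[of "\<lambda>k. (1 / real n) ^ k"]
    by simp
  then have "(\<lambda>k. (1 - (1 / real n) ^ Suc k) / (real n - 1)) \<longlonglongrightarrow> (1 - 0) / (real n - 1)"
    by (intro tendsto_intros) (use n1 in auto)
  then show ?thesis unfolding eq by simp
qed

lemma tendsto_dim_ratios:
  fixes d :: "nat \<Rightarrow> nat" and n :: nat
  assumes "2 \<le> n" and mono: "\<And>k. d k \<le> d (Suc k)"
    and growth_0: "d (Suc 0) \<le> d 0 + n * d 0"
    and growth: "\<And>k. d (Suc (Suc k)) \<le> d (Suc k) + n * (d (Suc k) - d k)"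
  shows "\<exists>c\<ge>0. (\<lambda>k. real (d k) / real (\<Sum>j\<le>k. n ^ j)) \<longlonglongrightarrow> c \<and>
      (\<lambda>k. real (d k) / real (n ^ Suc k)) \<longlonglongrightarrow> c / (real n - 1)"
proof -
  let ?g = "\<lambda>k. real (d k) / real (\<Sum>j\<le>k. n ^ j)"
  have nonneg: "\<forall>k. 0 \<le> ?g k" by (intro allI divide_nonneg_nonneg of_nat_0_le_iff)
  obtain c where c: "?g \<longlonglongrightarrow> c"
    using decseq_convergent[OF decseq_div_geometric_sum[OF mono growth_0 growth] nonneg] by blast
  have "0 \<le> c" using LIMSEQ_le_const[OF c] nonneg by blast
  have eq: "?g k * (real (\<Sum>j\<le>k. n ^ j) / real (n ^ Suc k)) = real (d k) / real (n ^ Suc k)" for k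
  proof -
    have "1 \<le> (\<Sum>j\<le>k. n ^ j)" using member_le_sum[of 0 "{..k}" "\<lambda>j. n ^ j"] by simp
    then have "real (\<Sum>j\<le>k. n ^ j) \<noteq> 0" by (metis of_nat_eq_0_iff not_one_le_zero)
    then show ?thesis by (simp del: of_nat_sum)
  qed
  have "(\<lambda>k. ?g k * (real (\<Sum>j\<le>k. n ^ j) / real (n ^ Suc k))) \<longlonglongrightarrow> c * (1 / (real n - 1))"
    by (rule tendsto_mult[OF c tendsto_geometric_sum_div_power[OF assms(1)]])
  then have "(\<lambda>k. real (d k) / real (n ^ Suc k)) \<longlonglongrightarrow> c / (real n - 1)"
    by (simp only: eq) simp
  with \<open>0 \<le> c\<close> c show ?thesis by blast
qed

section \<open>The defect operators and the spaces \<open>M\<^sub>k\<close>\<close>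

lemma word_op_Nil [simp]: "word_op T [] = id"
  by (simp add: word_op_def)

lemma word_op_Cons [simp]: "word_op T (i # \<beta>) = T i \<circ> word_op T \<beta>"
  by (simp add: word_op_def)

locale superharmonic =
  fixes n :: nat and T :: "nat \<Rightarrow> 'a::chilbert_space \<Rightarrow> 'a" and D :: "'a \<Rightarrow> 'a"
  assumes bounded_T: "\<And>i. i < n \<Longrightarrow> bounded_clinear (T i)"
    and phi_le: "op_le (phi_map n T D) D"
begin

abbreviation M :: "nat \<Rightarrow> 'a set" where
  "M k \<equiv> M_space n T D k"

definition defect :: "'a \<Rightarrow> 'a" where
  "defect x = D x - phi_map n T D x"

definition defect_sqrt :: "'a \<Rightarrow> 'a" where
  "defect_sqrt = op_sqrt defect"

definition T_adj :: "nat \<Rightarrow> 'a \<Rightarrow> 'a" where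
  "T_adj i = cadjoint (T i)"

definition words_le :: "nat \<Rightarrow> nat list set" where
  "words_le k = {\<alpha> \<in> words n. length \<alpha> \<le> k}"

definition word_adj :: "nat list \<Rightarrow> 'a \<Rightarrow> 'a" where
  "word_adj \<alpha> = cadjoint (word_op T \<alpha>)"

definition partial_defect :: "nat \<Rightarrow> 'a \<Rightarrow> 'a" where
  "partial_defect k x = D x - (phi_map n T ^^ Suc k) D x"

definition generators :: "nat \<Rightarrow> 'a set" where
  "generators k = {word_op T \<alpha> \<xi> | \<alpha> \<xi>. \<alpha> \<in> words_le k \<and> \<xi> \<in> range defect_sqrt}"

lemma positive_op_defect: "positive_op defect"
  using phi_le by (simp add: op_le_def defect_def[abs_def])

lemma clinear_defect_sqrt: "clinear defect_sqrt"
  and positive_form_defect_sqrt: "positive_form defect_sqrt"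
  using positive_op_op_sqrt[OF positive_op_defect]
  by (simp_all add: defect_sqrt_def positive_op_iff bounded_clinear_clinear)

lemma defect_sqrt_defect_sqrt: "defect_sqrt (defect_sqrt x) = defect x"
  unfolding defect_sqrt_def by (rule op_sqrt_op_sqrt[OF positive_op_defect])

lemma defect_sqrt_selfadjoint: "cinner (defect_sqrt x) y = cinner x (defect_sqrt y)"
  by (rule positive_form_selfadjoint[OF clinear_defect_sqrt positive_form_defect_sqrt])

lemma clinear_T: "i < n \<Longrightarrow> clinear (T i)"
  using bounded_T bounded_clinear_clinear by blast

lemma cinner_T_adj: "i < n \<Longrightarrow> cinner (T_adj i x) y = cinner x (T i y)"
  unfolding T_adj_def by (rule cadjoint_cinner[OF bounded_T])

lemma finite_words_le: "finite (words_le k)"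
proof (rule finite_subset)
  show "words_le k \<subseteq> {xs. set xs \<subseteq> {..<n} \<and> length xs \<le> k}"
    by (auto simp: words_le_def words_def)
qed (rule finite_lists_length_le, simp)

lemma words_le_0: "words_le 0 = {[]}"
  by (auto simp: words_le_def words_def)

lemma words_le_Suc: "words_le (Suc k) = insert [] ((\<lambda>(i, \<beta>). i # \<beta>) ` ({..<n} \<times> words_le k))"
proof (intro antisym subsetI)
  fix \<alpha> assume "\<alpha> \<in> words_le (Suc k)"
  then show "\<alpha> \<in> insert [] ((\<lambda>(i, \<beta>). i # \<beta>) ` ({..<n} \<times> words_le k))"
    by (cases \<alpha>) (auto simp: words_le_def words_def)
qed (auto simp: words_le_def words_def)

lemma bounded_clinear_word_op: "\<alpha> \<in> words n \<Longrightarrow> bounded_clinear (word_op T \<alpha>)"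
proof (induction \<alpha>)
  case Nil then show ?case using bounded_clinear_ident by (simp add: id_def)
next
  case (Cons i \<beta>)
  then have "i < n" "\<beta> \<in> words n" by (auto simp: words_def)
  with Cons.IH have "bounded_clinear (\<lambda>x. T i (word_op T \<beta> x))"
    by (intro bounded_clinear_compose[OF bounded_T]) auto
  then show ?case by (simp add: comp_def)
qed

lemma cinner_word_adj: "\<alpha> \<in> words n \<Longrightarrow> cinner (word_adj \<alpha> x) y = cinner x (word_op T \<alpha> y)"
  unfolding word_adj_def by (rule cadjoint_cinner[OF bounded_clinear_word_op])

lemma word_adj_Nil: "word_adj [] = (\<lambda>x. x)"
  unfolding word_adj_def by (rule cadjoint_eqI) simp

lemma word_adj_Cons: "i < n \<Longrightarrow> \<beta> \<in> words n \<Longrightarrow> word_adj (i # \<beta>) = (\<lambda>x. word_adj \<beta> (T_adj i x))"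
  unfolding word_adj_def
  by (rule cadjoint_eqI) (simp add: cadjoint_cinner[OF bounded_clinear_word_op] cinner_T_adj)

lemma partial_defect_Suc: "partial_defect (Suc k) x = defect x + (\<Sum>i<n. T i (partial_defect k (T_adj i x)))"
proof -
  let ?Y = "(phi_map n T ^^ Suc k) D"
  have "(\<Sum>i<n. T i (partial_defect k (T_adj i x))) =
      (\<Sum>i<n. T i (D (T_adj i x))) - (\<Sum>i<n. T i (?Y (T_adj i x)))"
    by (simp add: partial_defect_def clinear_diff[OF clinear_T] flip: sum_subtractf)
  then show ?thesis
    by (simp add: partial_defect_def defect_def phi_map_def T_adj_def)
qed

lemma partial_defect_eq_sum:
  "partial_defect k h = (\<Sum>\<alpha>\<in>words_le k. word_op T \<alpha> (defect (word_adj \<alpha> h)))"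
proof (induction k arbitrary: h)
  case 0
  show ?case by (simp add: partial_defect_def defect_def words_le_0 word_adj_Nil)
next
  case (Suc k)
  let ?g = "\<lambda>\<alpha>. word_op T \<alpha> (defect (word_adj \<alpha> h))"
  have inj: "inj_on (\<lambda>(i, \<beta>). i # \<beta>) ({..<n} \<times> words_le k)" by (auto simp: inj_on_def)
  have "(\<Sum>\<alpha>\<in>words_le (Suc k). ?g \<alpha>) = ?g [] + sum ?g ((\<lambda>(i, \<beta>). i # \<beta>) ` ({..<n} \<times> words_le k))"
    unfolding words_le_Suc by (rule sum.insert) (use finite_words_le in auto)
  also have "sum ?g ((\<lambda>(i, \<beta>). i # \<beta>) ` ({..<n} \<times> words_le k)) =
      sum (?g \<circ> (\<lambda>(i, \<beta>). i # \<beta>)) ({..<n} \<times> words_le k)"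
    by (rule sum.reindex[OF inj])
  also have "\<dots> = (\<Sum>i<n. \<Sum>\<beta>\<in>words_le k. ?g (i # \<beta>))"
    by (simp add: sum.cartesian_product split_def)
  also have "\<dots> = (\<Sum>i<n. T i (partial_defect k (T_adj i h)))"
  proof (rule sum.cong[OF refl])
    fix i assume "i \<in> {..<n}"
    then show "(\<Sum>\<beta>\<in>words_le k. ?g (i # \<beta>)) = T i (partial_defect k (T_adj i h))"
      by (simp add: Suc.IH clinear_sum[OF clinear_T] word_adj_Cons words_le_def)
  qed
  also have "?g [] = defect h" by (simp add: word_adj_Nil)
  finally show ?case by (simp add: partial_defect_Suc)
qed

lemma clinear_partial_defect: "clinear (partial_defect k)"
proof -
  have "clinear (\<lambda>h. word_op T \<alpha> (defect (word_adj \<alpha> h)))" if "\<alpha> \<in> words_le k" for \<alpha>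
  proof -
    from that have W: "bounded_clinear (word_op T \<alpha>)"
      by (simp add: words_le_def bounded_clinear_word_op)
    have "clinear defect"
      using positive_op_defect by (simp add: positive_op_iff bounded_clinear_clinear)
    with W show ?thesis
      unfolding word_adj_def
      by (rule clinear_compose[OF bounded_clinear_clinear clinear_compose[OF _ cadjoint_clinear]]) (rule W)
  qed
  then show ?thesis
    unfolding partial_defect_eq_sum[abs_def] by (rule clinear_sum_fun)
qed

lemma Re_cinner_partial_defect:
  "Re (cinner x (partial_defect k x)) = (\<Sum>\<alpha>\<in>words_le k. (norm (defect_sqrt (word_adj \<alpha> x)))\<^sup>2)"
proof -
  have "cinner x (word_op T \<alpha> (defect (word_adj \<alpha> x))) =
      cinner (defect_sqrt (word_adj \<alpha> x)) (defect_sqrt (word_adj \<alpha> x))" if "\<alpha> \<in> words_le k" for \<alpha>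
    using that by (simp add: words_le_def cinner_word_adj[symmetric] defect_sqrt_selfadjoint
        flip: defect_sqrt_defect_sqrt)
  then show ?thesis
    by (simp add: partial_defect_eq_sum cinner_sum_right Re_sum cinner_self_Re)
qed

lemma generators_0: "generators 0 = range defect_sqrt"
  by (auto simp: generators_def words_le_0)

lemma generators_Suc: "generators (Suc k) = range defect_sqrt \<union> (\<Union>i<n. T i ` generators k)"
proof (intro antisym subsetI)
  fix y assume "y \<in> generators (Suc k)"
  then obtain \<alpha> \<xi> where y: "y = word_op T \<alpha> \<xi>" "\<alpha> \<in> words_le (Suc k)" "\<xi> \<in> range defect_sqrt"
    by (auto simp: generators_def)
  show "y \<in> range defect_sqrt \<union> (\<Union>i<n. T i ` generators k)"
  proof (cases \<alpha>)
    case (Cons i \<beta>)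
    with y have "i < n" "y = T i (word_op T \<beta> \<xi>)" "word_op T \<beta> \<xi> \<in> generators k"
      by (auto simp: words_le_def words_def generators_def)
    then show ?thesis by blast
  qed (use y in simp)
next
  fix y assume "y \<in> range defect_sqrt \<union> (\<Union>i<n. T i ` generators k)"
  then show "y \<in> generators (Suc k)"
  proof
    assume "y \<in> range defect_sqrt"
    then show ?thesis unfolding generators_def
      by (intro CollectI exI[of _ "[]"] exI[of _ y]) (simp add: words_le_def words_def)
  next
    assume "y \<in> (\<Union>i<n. T i ` generators k)"
    then obtain i \<beta> \<xi> where "i < n" "\<beta> \<in> words_le k" "\<xi> \<in> range defect_sqrt" "y = T i (word_op T \<beta> \<xi>)"
      by (auto simp: generators_def)
    then show ?thesis unfolding generators_def
      by (intro CollectI exI[of _ "i # \<beta>"] exI[of _ \<xi>]) (simp add: words_le_def words_def)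
  qed
qed

lemma M_eq_span_generators: "M k = cv.span (generators k)"
  by (simp add: M_space_def generators_def words_le_def cspan_eq_span defect_sqrt_def
      defect_def[abs_def] conj_assoc)

lemma span_M: "cv.span (M k) = M k"
  by (simp add: M_eq_span_generators cv.span_span)

lemma M_mono: "k \<le> l \<Longrightarrow> M k \<subseteq> M l"
  unfolding M_eq_span_generators generators_def words_le_def
  by (intro cv.span_mono) (use order_trans in blast)

lemma M_Suc: "M (Suc k) = cv.span (range defect_sqrt \<union> (\<Union>i<n. T i ` M k))"
  unfolding M_eq_span_generators generators_Suc cv.span_eq
proof
  show "range defect_sqrt \<union> (\<Union>i<n. T i ` generators k) \<subseteq>
      cv.span (range defect_sqrt \<union> (\<Union>i<n. T i ` cv.span (generators k)))"
    using cv.span_superset[of "generators k"] by (blast intro: cv.span_base)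
  have "T i ` cv.span (generators k) \<subseteq> cv.span (range defect_sqrt \<union> (\<Union>i<n. T i ` generators k))"
    if "i < n" for i
    unfolding clinear_span_image[OF clinear_T[OF that]] using that by (intro cv.span_mono) blast
  then show "range defect_sqrt \<union> (\<Union>i<n. T i ` cv.span (generators k)) \<subseteq>
      cv.span (range defect_sqrt \<union> (\<Union>i<n. T i ` generators k))"
    by (auto intro: cv.span_base)
qed

lemma T_image_M_subset: "i < n \<Longrightarrow> T i ` M k \<subseteq> M (Suc k)"
  unfolding M_Suc by (intro subset_trans[OF _ cv.span_superset]) blast

lemma range_defect_sqrt_subset_M: "range defect_sqrt \<subseteq> M k"
  using M_mono[of 0 k] cv.span_superset[of "range defect_sqrt"]
  by (simp add: M_eq_span_generators generators_0)

lemma partial_defect_in_M: "partial_defect k x \<in> M k"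
proof -
  have "word_op T \<alpha> (defect (word_adj \<alpha> x)) \<in> generators k" if "\<alpha> \<in> words_le k" for \<alpha>
    using that by (auto simp: generators_def simp flip: defect_sqrt_defect_sqrt)
  then show ?thesis
    unfolding partial_defect_eq_sum M_eq_span_generators
    by (intro cv.span_sum) (auto intro: cv.span_base)
qed

text \<open>If \<open>\<langle>x, (D - \<phi>\<^sup>k\<^sup>+\<^sup>1(D)) x\<rangle> = 0\<close>, then every \<open>(D - \<phi>(D))\<^sup>1\<^sup>/\<^sup>2 T\<^sub>\<alpha>\<^sup>* x\<close> with \<open>|\<alpha>| \<le> k\<close> vanishes,
  i.e. \<open>x\<close> is orthogonal to all generators of \<open>M\<^sub>k\<close>.\<close>
lemma cinner_M_eq_zero:
  assumes "Re (cinner x (partial_defect k x)) = 0" and "m \<in> M k"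
  shows "cinner x m = 0"
proof -
  have "defect_sqrt (word_adj \<alpha> x) = 0" if "\<alpha> \<in> words_le k" for \<alpha>
    using assms(1) that finite_words_le
    by (simp add: Re_cinner_partial_defect sum_nonneg_eq_0_iff)
  then have "cinner x g = 0" if "g \<in> generators k" for g
    using that by (auto simp: generators_def words_le_def cinner_word_adj[symmetric]
        defect_sqrt_selfadjoint[symmetric])
  then show ?thesis
    using assms(2) unfolding M_eq_span_generators by (rule cinner_span_eq_zero)
qed

lemma op_rank_partial_defect: "op_rank (partial_defect k) = cdim (M k)"
  unfolding op_rank_def
proof (rule antisym)
  show "cdim (range (partial_defect k)) \<le> cdim (M k)"
    by (rule cdim_mono) (auto simp: span_M partial_defect_in_M)
  show "cdim (M k) \<le> cdim (range (partial_defect k))"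
  proof (rule cdim_inj_image[OF clinear_partial_defect])
    show "x = 0" if "x \<in> cv.span (M k)" "partial_defect k x = 0" for x
      using that cinner_M_eq_zero[of x k x] by (simp add: span_M cinner_self_eq_zero)
  qed (auto intro: cv.span_base)
qed

lemma poisson_K_adj_fock_proj:
  "poisson_K_adj n T D (fock_proj k (poisson_K n T D h)) = partial_defect k h"
proof -
  let ?f = "\<lambda>x \<alpha>. cinner (poisson_K n T D x \<alpha>) (fock_proj k (poisson_K n T D h) \<alpha>)"
  have sqrt_eq: "op_sqrt (\<lambda>x. D x - phi_map n T D x) = defect_sqrt"
    by (simp add: defect_sqrt_def defect_def[abs_def])
  have "?f x \<alpha> = cinner x (word_op T \<alpha> (defect (word_adj \<alpha> h)))" if "\<alpha> \<in> words_le k" for x \<alpha>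
  proof -
    from that have \<alpha>: "\<alpha> \<in> words n" "length \<alpha> \<le> k" by (auto simp: words_le_def)
    then have "?f x \<alpha> = cinner (defect_sqrt (word_adj \<alpha> x)) (defect_sqrt (word_adj \<alpha> h))"
      by (simp add: poisson_K_def fock_proj_def sqrt_eq word_adj_def)
    also have "\<dots> = cinner (word_adj \<alpha> x) (defect (word_adj \<alpha> h))"
      by (simp add: defect_sqrt_selfadjoint defect_sqrt_defect_sqrt)
    finally show ?thesis by (simp add: cinner_word_adj[OF \<alpha>(1)])
  qed
  then have "infsum (?f x) (words n) = cinner x (partial_defect k h)" for x
  proof -
    have "infsum (?f x) (words n) = infsum (?f x) (words_le k)"
      by (rule infsum_cong_neutral) (auto simp: words_le_def fock_proj_def)
    also have "\<dots> = sum (?f x) (words_le k)"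
      by (rule infsum_finite[OF finite_words_le])
    also have "\<dots> = cinner x (partial_defect k h)"
      using \<open>\<And>x \<alpha>. \<alpha> \<in> words_le k \<Longrightarrow> ?f x \<alpha> = _\<close>
      by (simp add: partial_defect_eq_sum cinner_sum_right)
    finally show ?thesis .
  qed
  then show ?thesis
    unfolding poisson_K_adj_def
  proof (intro the_equality allI)
    fix y assume "\<forall>x. cinner x y = infsum (?f x) (words n)"
    then show "y = partial_defect k h"
      using \<open>\<And>x. infsum (?f x) (words n) = _\<close> by (auto intro: cinner_ext_right)
  qed simp
qed

lemma cdim_M_eq_top: "cdim (M 0) = \<infinity> \<Longrightarrow> cdim (M k) = \<infinity>"
  using cdim_mono[of "M 0" "M k"] M_mono[of 0 k] by (simp add: span_M top_unique)

lemma finite_span_M: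
  assumes "cdim (M 0) < \<infinity>"
  shows "\<exists>F. finite F \<and> M k \<subseteq> cv.span F"
proof (induction k)
  case 0
  show ?case using cdim_finite_imp_finite_span[OF assms] .
next
  case (Suc k)
  then obtain F where F: "finite F" "M k \<subseteq> cv.span F" by blast
  obtain F0 where F0: "finite F0" "M 0 \<subseteq> cv.span F0"
    using cdim_finite_imp_finite_span[OF assms] by blast
  define F' where "F' = F0 \<union> (\<Union>i<n. T i ` F)"
  have "range defect_sqrt \<subseteq> cv.span F'"
  proof -
    have "range defect_sqrt \<subseteq> cv.span F0" using range_defect_sqrt_subset_M[of 0] F0(2) by (rule order_trans)
    also have "\<dots> \<subseteq> cv.span F'" unfolding F'_def by (rule cv.span_mono) (rule Un_upper1)
    finally show ?thesis .
  qed
  moreover have "T i ` M k \<subseteq> cv.span F'" if "i < n" for i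
  proof -
    have "T i ` M k \<subseteq> cv.span (T i ` F)"
      using image_mono[OF F(2), of "T i"] clinear_span_image[OF clinear_T[OF that], of F] by simp
    also have "\<dots> \<subseteq> cv.span F'" using that unfolding F'_def by (intro cv.span_mono) blast
    finally show ?thesis .
  qed
  ultimately have "range defect_sqrt \<union> (\<Union>i<n. T i ` M k) \<subseteq> cv.span F'" by blast
  then have "M (Suc k) \<subseteq> cv.span F'"
    unfolding M_Suc by (rule cv.span_minimal[OF _ cv.subspace_span])
  moreover have "finite F'" using F F0 by (simp add: F'_def)
  ultimately show ?case by blast
qed

lemma cdim_M_eq_dim: "cdim (M 0) < \<infinity> \<Longrightarrow> cdim (M k) = ennreal (real (cv.dim (M k)))"
  using finite_span_M cdim_eq_dim by blast

lemma dim_M_Suc_mono: "cdim (M 0) < \<infinity> \<Longrightarrow> cv.dim (M k) \<le> cv.dim (M (Suc k))"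
  using cdim_mono[of "M k" "M (Suc k)"] M_mono[of k "Suc k"] by (simp add: span_M cdim_M_eq_dim)

text \<open>\<open>M\<^sub>k\<^sub>+\<^sub>1\<close> is spanned by \<open>M\<^sub>k\<close> and the images \<open>T\<^sub>i M\<^sub>k\<close>, and each \<open>T\<^sub>i\<close> maps \<open>M\<^sub>k\<^sub>-\<^sub>1\<close> into \<open>M\<^sub>k\<close>:
  only the \<open>dim M\<^sub>k - dim M\<^sub>k\<^sub>-\<^sub>1\<close> new basis vectors of \<open>M\<^sub>k\<close> can produce new directions.\<close>
lemma dim_M_Suc_le:
  assumes "cdim (M 0) < \<infinity>"
  shows "cv.dim (M (Suc 0)) \<le> cv.dim (M 0) + n * cv.dim (M 0)"
    and "cv.dim (M (Suc (Suc k))) \<le> cv.dim (M (Suc k)) + n * (cv.dim (M (Suc k)) - cv.dim (M k))"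
proof -
  have sub: "M (Suc k) \<subseteq> cv.span (M k \<union> (\<Union>i<n. T i ` M k))" for k
    unfolding M_Suc using range_defect_sqrt_subset_M by (intro cv.span_mono) blast
  obtain F where "finite F" "M 0 \<subseteq> cv.span F" using finite_span_M[OF assms] by blast
  from dim_span_images_le[OF clinear_T empty_subsetI this(2,1) _ sub]
  show "cv.dim (M (Suc 0)) \<le> cv.dim (M 0) + n * cv.dim (M 0)"
    by (simp add: cv.dim_eq_card_independent[OF cv.independent_empty])
  obtain F where "finite F" "M (Suc k) \<subseteq> cv.span F" using finite_span_M[OF assms] by blast
  from dim_span_images_le[OF clinear_T M_mono[of k "Suc k"] this(2,1) T_image_M_subset sub]
  show "cv.dim (M (Suc (Suc k))) \<le> cv.dim (M (Suc k)) + n * (cv.dim (M (Suc k)) - cv.dim (M k))"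
    by simp
qed

lemma euler_characteristic_limits:
  assumes "2 \<le> n"
  shows "\<exists>chi L. ((\<lambda>k. cdim (M k) / ennreal (real (\<Sum>j\<le>k. n ^ j))) \<longlongrightarrow> chi) sequentially \<and>
      ((\<lambda>k. cdim (M k) / ennreal (real (n ^ Suc k))) \<longlongrightarrow> L) sequentially \<and>
      chi = ennreal (real (n - 1)) * L \<and> (chi < \<infinity> \<longleftrightarrow> cdim (M 0) < \<infinity>)"
proof (cases "cdim (M 0) < \<infinity>")
  case True
  obtain c where c: "0 \<le> c" "(\<lambda>k. real (cv.dim (M k)) / real (\<Sum>j\<le>k. n ^ j)) \<longlonglongrightarrow> c"
    "(\<lambda>k. real (cv.dim (M k)) / real (n ^ Suc k)) \<longlonglongrightarrow> c / (real n - 1)"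
    using tendsto_dim_ratios[OF assms dim_M_Suc_mono[OF True] dim_M_Suc_le[OF True]] by blast
  have pos: "0 < real (\<Sum>j\<le>k. n ^ j)" "0 < real (n ^ Suc k)" for k
    using member_le_sum[of 0 "{..k}" "\<lambda>j. n ^ j"] assms by (simp_all del: of_nat_sum)
  have "cdim (M k) / ennreal (real (\<Sum>j\<le>k. n ^ j)) = ennreal (real (cv.dim (M k)) / real (\<Sum>j\<le>k. n ^ j))"
    "cdim (M k) / ennreal (real (n ^ Suc k)) = ennreal (real (cv.dim (M k)) / real (n ^ Suc k))" for k
    by (simp_all only: cdim_M_eq_dim[OF True] divide_ennreal[OF of_nat_0_le_iff pos(1)]
        divide_ennreal[OF of_nat_0_le_iff pos(2)])
  note eq = this
  show ?thesis
  proof (intro exI conjI)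
    show "((\<lambda>k. cdim (M k) / ennreal (real (\<Sum>j\<le>k. n ^ j))) \<longlongrightarrow> ennreal c) sequentially"
      unfolding eq(1) by (rule tendsto_ennrealI[OF c(2)])
    show "((\<lambda>k. cdim (M k) / ennreal (real (n ^ Suc k))) \<longlongrightarrow> ennreal (c / (real n - 1))) sequentially"
      unfolding eq(2) by (rule tendsto_ennrealI[OF c(3)])
    show "ennreal c = ennreal (real (n - 1)) * ennreal (c / (real n - 1))"
      using assms c(1) by (simp add: of_nat_diff flip: ennreal_mult)
    show "(ennreal c < \<infinity>) = (cdim (M 0) < \<infinity>)" using True by simp
  qed
next
  case False
  then have "cdim (M k) = \<infinity>" for k using cdim_M_eq_top by (simp add: less_top[symmetric])
  with assms show ?thesis
    by (intro exI[of _ \<infinity>] conjI) (simp_all add: ennreal_top_divide ennreal_mult_top)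
qed

end

theorem theorem6p8:
  fixes n :: nat and T :: "nat \<Rightarrow> 'a::chilbert_space \<Rightarrow> 'a" and D :: "'a \<Rightarrow> 'a"
  assumes "n \<ge> 2"
    and "\<forall>i<n. bounded_clinear (T i)"
    and "positive_op D"
    and "op_le (phi_map n T D) D"
  shows "\<exists>chi::ennreal.
     ((\<lambda>k. cdim (M_space n T D k) / ennreal (real (\<Sum>j\<le>k. n ^ j))) \<longlongrightarrow> chi) sequentially \<and>
     ((\<lambda>k. op_rank (\<lambda>h. poisson_K_adj n T D (fock_proj k (poisson_K n T D h)))
            / ennreal (real (\<Sum>j\<le>k. n ^ j))) \<longlongrightarrow> chi) sequentially \<and>
     (\<exists>L. ((\<lambda>k. op_rank (\<lambda>x. D x - (phi_map n T ^^ k) D x) / ennreal (real (n ^ k)))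
              \<longlongrightarrow> L) sequentially \<and>
          chi = ennreal (real (n - 1)) * L) \<and>
     (chi < \<infinity> \<longleftrightarrow> op_rank (\<lambda>x. D x - phi_map n T D x) < \<infinity>)"
proof -
  interpret superharmonic n T D
    using assms(2,4) by unfold_locales auto
  obtain chi L where chi: "((\<lambda>k. cdim (M k) / ennreal (real (\<Sum>j\<le>k. n ^ j))) \<longlongrightarrow> chi) sequentially"
    and L: "((\<lambda>k. cdim (M k) / ennreal (real (n ^ Suc k))) \<longlongrightarrow> L) sequentially"
    and "chi = ennreal (real (n - 1)) * L" "chi < \<infinity> \<longleftrightarrow> cdim (M 0) < \<infinity>"
    using euler_characteristic_limits[OF assms(1)] by blast
  moreover have rank: "op_rank (\<lambda>x. D x - (phi_map n T ^^ Suc k) D x) = cdim (M k)" for k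
    using op_rank_partial_defect[of k] by (simp add: partial_defect_def[abs_def])
  moreover have "((\<lambda>k. op_rank (\<lambda>x. D x - (phi_map n T ^^ k) D x) / ennreal (real (n ^ k))) \<longlongrightarrow> L) sequentially"
    by (rule filterlim_sequentially_Suc[THEN iffD1]) (simp only: rank L)
  moreover have "(\<lambda>h. poisson_K_adj n T D (fock_proj k (poisson_K n T D h))) = partial_defect k" for k
    by (rule ext) (rule poisson_K_adj_fock_proj)
  ultimately show ?thesis
    using rank[of 0] by (auto simp: op_rank_partial_defect)
qed

end
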